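(* Let $\Omega$ be a finite-dimensional real Euclidean space and $f_1,\dots,f_N\colon\Omega\to\mathbb{R}$ convex functions, each $\mu$-strongly convex and $L$-smooth for some $\mu,L>0$; let $E=\frac1N\sum_{j=1}^N f_j$ and let $\theta^*$ be its minimizer. Run DualFL (described in the context) with hyperparameters $\rho\in[0,\nu/L]$ and $\nu\in(0,\mu]$, and suppose that for some $\gamma>0$ the local iterates satisfy, for all $1\le j\le N$ and $n\ge0$, \[ \Gamma^{n,j}(\theta_j^{(n+1)}) \le \frac1N\left(\frac{1-\sqrt{\rho}}{1+\gamma}\right)^n . \] Then $\{\theta^{(n)}\}$ converges to $\theta^*$ and, for $n\ge 0$, \[ E(\theta^{(n)})-E(\theta^* ) \lesssim \|\theta^{(n)}-\theta^*\|^2 \lesssim (1-\sqrt{\rho})^n . \] In particular, with $\rho=\kappa^{-1}$ and $\nu=\mu$, where $\kappa=L/\mu$, one has $E(\theta^{(n)})-E(\theta^* )\lesssim\|\theta^{(n)}-\theta^*\|^2\lesssim(1-1/\sqrt{\kappa})^n$.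
   Context: $h$ is $\mu$-strongly convex if $h-\frac{\mu}{2}\|\cdot\|^2$ is convex; $h$ is $L$-smooth if it is differentiable with $L$-Lipschitz gradient; $h^*(p)=\sup_x\{\langle p,x\rangle-h(x)\}$ is the Legendre--Fenchel conjugate. $A\lesssim B$ means $A\le CB$ for a constant $C>0$ independent of $n$. DualFL with hyperparameters $\rho\ge0$, $\nu>0$: set $\theta^{(0)}=\theta_j^{(0)}=0$, $\zeta_j^{(0)}=\zeta_j^{(-1)}=0$, $t_0=1$. For $n=0,1,\dots$: each client $j$ computes an approximate minimizer $\theta_j^{(n+1)}$ of $E^{n,j}(\theta)=f_j(\theta)-\nu\langle\zeta_j^{(n)},\theta\rangle$; $\theta^{(n+1)}=\frac1N\sum_j\theta_j^{(n+1)}$; $t_{n+1}=\frac{1-\rho t_n^2+\sqrt{(1-\rho t_n^2)^2+4t_n^2}}{2}$, $\beta_n=\frac{t_n-1}{t_{n+1}}\cdot\frac{1-t_{n+1}\rho}{1-\rho}$; $\zeta_j^{(n+1)}=(1+\beta_n)(\zeta_j^{(n)}+\theta^{(n+1)}-\theta_j^{(n+1)})-\beta_n(\zeta_j^{(n-1)}+\theta^{(n)}-\theta_j^{(n)})$. Primal-dual gap: $g_j=f_j-\frac\nu2\|\cdot\|^2$, $E^{n,j}_{\mathrm d}(\xi)=g_j^*(\xi)+\frac1{2\nu}\|\xi-\nu\zeta_j^{(n)}\|^2$, $\Gamma^{n,j}(\theta)=E^{n,j}(\theta)+E^{n,j}_{\mathrm d}(\nu(\zeta_j^{(n)}-\theta))$.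 *)

theory Defs
  imports "HOL-Analysis.Analysis"
begin

definition strongly_convex :: "real \<Rightarrow> ('a::real_inner \<Rightarrow> real) \<Rightarrow> bool" where
  "strongly_convex \<mu> h \<longleftrightarrow> convex_on UNIV (\<lambda>x. h x - \<mu> / 2 * (norm x)\<^sup>2)"

definition L_smooth :: "real \<Rightarrow> ('a::real_inner \<Rightarrow> real) \<Rightarrow> bool" where
  "L_smooth L h \<longleftrightarrow> (\<exists>G. (\<forall>x. (h has_derivative (\<lambda>v. G x \<bullet> v)) (at x))
                          \<and> (\<forall>x y. norm (G x - G y) \<le> L * norm (x - y)))"

definition fconj :: "('a::real_inner \<Rightarrow> real) \<Rightarrow> 'a \<Rightarrow> ereal" where
  "fconj h p = (SUP x. ereal (p \<bullet> x - h x))"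

fun dualfl_t :: "real \<Rightarrow> nat \<Rightarrow> real" where
  "dualfl_t \<rho> 0 = 1"
| "dualfl_t \<rho> (Suc n) =
     (let t = dualfl_t \<rho> n in
       (1 - \<rho> * t\<^sup>2 + sqrt ((1 - \<rho> * t\<^sup>2)\<^sup>2 + 4 * t\<^sup>2)) / 2)"

definition dualfl_beta :: "real \<Rightarrow> nat \<Rightarrow> real" where
  "dualfl_beta \<rho> n = (dualfl_t \<rho> n - 1) / dualfl_t \<rho> (Suc n)
                     * ((1 - dualfl_t \<rho> (Suc n) * \<rho>) / (1 - \<rho>))"

text \<open>Dual variable zeta_j^(n) of client j, given the global iterates th n = theta^(n)
  and the local iterates thj n = theta_j^(n); zeta^(0) = zeta^(-1) = 0.\<close>
fun dualfl_zeta :: "real \<Rightarrow> (nat \<Rightarrow> 'a::real_vector) \<Rightarrow> (nat \<Rightarrow> 'a) \<Rightarrow> nat \<Rightarrow> 'a" where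
  "dualfl_zeta \<rho> th thj 0 = 0"
| "dualfl_zeta \<rho> th thj (Suc 0) =
     (1 + dualfl_beta \<rho> 0) *\<^sub>R (0 + th 1 - thj 1) - dualfl_beta \<rho> 0 *\<^sub>R (0 + th 0 - thj 0)"
| "dualfl_zeta \<rho> th thj (Suc (Suc n)) =
     (1 + dualfl_beta \<rho> (Suc n)) *\<^sub>R
        (dualfl_zeta \<rho> th thj (Suc n) + th (Suc (Suc n)) - thj (Suc (Suc n)))
     - dualfl_beta \<rho> (Suc n) *\<^sub>R (dualfl_zeta \<rho> th thj n + th (Suc n) - thj (Suc n))"

text \<open>Local primal-dual gap Gamma^{n,j}(theta) for the local function h = f_j and
  current dual variable z = zeta_j^(n).\<close>
definition dualfl_gap :: "real \<Rightarrow> ('a::real_inner \<Rightarrow> real) \<Rightarrow> 'a \<Rightarrow> 'a \<Rightarrow> ereal" where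
  "dualfl_gap \<nu> h z \<theta> =
     ereal (h \<theta> - \<nu> * (z \<bullet> \<theta>))
     + (fconj (\<lambda>x. h x - \<nu> / 2 * (norm x)\<^sup>2) (\<nu> *\<^sub>R (z - \<theta>))
        + ereal (1 / (2 * \<nu>) * (norm (\<nu> *\<^sub>R (z - \<theta>) - \<nu> *\<^sub>R z))\<^sup>2))"

end

theory Submission
  imports Defs
begin

text \<open>
  Write \<open>g\<^sub>j = f\<^sub>j - \<nu>/2 |.|\<^sup>2\<close> and \<open>\<xi>\<^sub>j(n) = \<nu> (\<zeta>\<^sub>j(n-1) - \<theta>\<^sub>j(n))\<close>. The \<open>\<zeta>\<^sub>j(n)\<close> sum to zero,
  so \<open>\<Sum>\<^sub>j \<xi>\<^sub>j(n) = -N\<nu> \<theta>(n)\<close>: DualFL is an inexact FISTA-type accelerated method for the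
  dual problem \<open>min \<Sum>\<^sub>j g\<^sub>j\<^sup>*(\<xi>\<^sub>j) + |\<Sum>\<^sub>j \<xi>\<^sub>j|\<^sup>2/(2N\<nu>)\<close>, in which every \<open>g\<^sub>j\<^sup>*\<close> is
  \<open>1/(L-\<nu>)\<close>-strongly convex because \<open>g\<^sub>j\<close> is \<open>(L-\<nu>)\<close>-smooth. The gap hypothesis says that
  \<open>\<xi>\<^sub>j(n+1)\<close> solves the local dual subproblem up to \<open>\<epsilon>(n)\<close>. The FISTA Lyapunov function
  \<open>W(n)\<close> then satisfies \<open>W(n+1) \<le> (1 + \<delta>\<^sub>n) ((1 - 1/t\<^sub>n) W(n) + O(\<epsilon>(n)/\<delta>\<^sub>n))\<close>; since
  \<open>\<surd>\<rho> t\<^sub>n \<le> 1\<close> and \<open>t\<^sub>n \<le> n + 1\<close>, it decays both like \<open>(1 - \<surd>\<rho>)\<^sup>n\<close> and like \<open>1/n\<close>.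
  It dominates \<open>N\<nu>/2 |\<theta>(n) - \<theta>\<^sup>*|\<^sup>2\<close>, and \<open>L\<close>-smoothness gives
  \<open>E(\<theta>) - E(\<theta>\<^sup>*) \<le> L/2 |\<theta> - \<theta>\<^sup>*|\<^sup>2\<close>. In the degenerate case \<open>\<rho> = 1\<close>, which forces
  \<open>L = \<nu> = \<mu>\<close>, every \<open>g\<^sub>j\<close> is affine and the iteration is exact from the first step on.
\<close>

section \<open>Smooth and strongly convex functions\<close>

lemma L_smooth_descent:
  fixes h :: "'a::real_inner \<Rightarrow> real"
  assumes deriv: "\<And>x. (h has_derivative (\<lambda>v. G x \<bullet> v)) (at x)"
    and lipschitz: "\<And>x y. norm (G x - G y) \<le> L * norm (x - y)"
  shows "h y \<le> h x + G x \<bullet> (y - x) + L / 2 * (norm (y - x))\<^sup>2"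
proof -
  define v where "v = y - x"
  define K where "K = L / 2 * (norm v)\<^sup>2"
  define \<phi> where "\<phi> s = h (x + s *\<^sub>R v) - s * (G x \<bullet> v) - K * s\<^sup>2" for s
  have "\<phi> 1 \<le> \<phi> 0"
  proof (rule DERIV_nonpos_imp_nonincreasing[of 0 1])
    fix s :: real assume s: "0 \<le> s" "s \<le> 1"
    have "((\<lambda>s. h (x + s *\<^sub>R v)) has_derivative (\<lambda>r. G (x + s *\<^sub>R v) \<bullet> (r *\<^sub>R v))) (at s)"
      by (rule has_derivative_compose[OF _ deriv]) (auto intro!: derivative_eq_intros)
    then have "DERIV (\<lambda>s. h (x + s *\<^sub>R v)) s :> G (x + s *\<^sub>R v) \<bullet> v"
      unfolding has_field_derivative_def by (rule has_derivative_eq_rhs) (auto simp: mult.commute)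
    then have "DERIV \<phi> s :> G (x + s *\<^sub>R v) \<bullet> v - G x \<bullet> v - K * (2 * s)"
      unfolding \<phi>_def by (auto intro!: derivative_eq_intros)
    moreover have "G (x + s *\<^sub>R v) \<bullet> v - G x \<bullet> v \<le> K * (2 * s)"
    proof -
      have "G (x + s *\<^sub>R v) \<bullet> v - G x \<bullet> v \<le> norm (G (x + s *\<^sub>R v) - G x) * norm v"
        by (metis inner_diff_left norm_cauchy_schwarz)
      also have "\<dots> \<le> L * norm (s *\<^sub>R v) * norm v"
        using lipschitz[of "x + s *\<^sub>R v" x] by (simp add: mult_right_mono)
      also have "\<dots> = K * (2 * s)" using s by (simp add: K_def power2_eq_square)
      finally show ?thesis .
    qed
    ultimately show "\<exists>y. DERIV \<phi> s :> y \<and> y \<le> 0" by force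
  qed simp
  then show ?thesis unfolding \<phi>_def v_def K_def by (simp add: algebra_simps)
qed

lemma convex_on_inner_tangent:
  fixes h :: "'a::real_inner \<Rightarrow> real"
  assumes convex: "convex_on UNIV h" and deriv: "(h has_derivative (\<lambda>v. D \<bullet> v)) (at x)"
  shows "h y \<ge> h x + D \<bullet> (y - x)"
proof -
  define v where "v = y - x"
  define \<phi> where "\<phi> s = h (x + s *\<^sub>R v)" for s
  have "convex_on UNIV \<phi>"
  proof (rule convex_onI)
    fix t a b :: real assume "0 < t" "t < 1"
    have "x + ((1 - t) *\<^sub>R a + t *\<^sub>R b) *\<^sub>R v = (1 - t) *\<^sub>R (x + a *\<^sub>R v) + t *\<^sub>R (x + b *\<^sub>R v)"
      by (simp add: algebra_simps)
    with \<open>0 < t\<close> \<open>t < 1\<close> show "\<phi> ((1 - t) *\<^sub>R a + t *\<^sub>R b) \<le> (1 - t) * \<phi> a + t * \<phi> b"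
      unfolding \<phi>_def using convex_onD[OF convex, of t "x + a *\<^sub>R v" "x + b *\<^sub>R v"] by simp
  qed simp
  moreover have "((\<lambda>s. h (x + s *\<^sub>R v)) has_derivative (\<lambda>r. D \<bullet> (r *\<^sub>R v))) (at 0)"
    by (rule has_derivative_compose[of "\<lambda>s. x + s *\<^sub>R v" _ _ _ h])
      (auto intro!: derivative_eq_intros deriv)
  then have "(\<phi> has_field_derivative D \<bullet> v) (at 0 within UNIV)"
    unfolding has_field_derivative_def \<phi>_def by (rule has_derivative_eq_rhs) (auto simp: mult.commute)
  ultimately have "\<phi> 1 - \<phi> 0 \<ge> D \<bullet> v"
    using convex_on_imp_above_tangent[of UNIV \<phi> 0 1] by simp
  then show ?thesis unfolding \<phi>_def v_def by simp
qed

lemma norm_power2_expand: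
  fixes x y :: "'a::real_inner"
  shows "(norm y)\<^sup>2 = (norm x)\<^sup>2 + 2 * (x \<bullet> (y - x)) + (norm (y - x))\<^sup>2"
  by (simp add: power2_norm_eq_inner inner_diff_left inner_diff_right inner_commute)

lemma scaled_norm_power2_expand:
  fixes x y :: "'a::real_inner"
  shows "c / 2 * (norm y)\<^sup>2 = c / 2 * (norm x)\<^sup>2 + (c *\<^sub>R x) \<bullet> (y - x) + c / 2 * (norm (y - x))\<^sup>2"
  by (subst norm_power2_expand[of y x]) (simp add: algebra_simps)

lemma norm_convex_comb_power2:
  fixes a b :: "'a::real_inner"
  shows "(1 - t) * (norm a)\<^sup>2 + t * (norm b)\<^sup>2
    = (norm ((1 - t) *\<^sub>R a + t *\<^sub>R b))\<^sup>2 + t * (1 - t) * (norm (a - b))\<^sup>2"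
  by (simp add: power2_norm_eq_inner inner_add_left inner_add_right inner_diff_left
      inner_diff_right algebra_simps inner_commute)

lemma norm_sum_power2_le:
  fixes a :: "nat \<Rightarrow> 'a::real_inner"
  shows "(norm (\<Sum>j<N. a j))\<^sup>2 \<le> real N * (\<Sum>j<N. (norm (a j))\<^sup>2)"
proof -
  have "(norm (\<Sum>j<N. a j))\<^sup>2 \<le> (\<Sum>j<N. norm (a j))\<^sup>2"
    by (intro power_mono norm_sum) auto
  also have "\<dots> \<le> (\<Sum>j<N. (norm (a j))\<^sup>2) * card {..<N}"
    by (rule sum_squared_le_sum_of_squares)
  finally show ?thesis by (simp add: mult.commute)
qed

lemma norm_add_power2_div_le:
  fixes a b :: "'a::real_inner"
  assumes "\<delta> > 0"
  shows "(norm (a + b))\<^sup>2 / (1 + \<delta>) \<le> (norm a)\<^sup>2 + (norm b)\<^sup>2 / \<delta>"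
proof -
  have "(1 + \<delta>) * ((norm a)\<^sup>2 + (norm b)\<^sup>2 / \<delta>) - (norm (a + b))\<^sup>2 = (norm (\<delta> *\<^sub>R a - b))\<^sup>2 / \<delta>"
    using assms unfolding power2_norm_eq_inner
    by (simp add: inner_add_left inner_add_right inner_diff_left inner_diff_right inner_commute
        field_simps power2_eq_square)
  then have "(norm (a + b))\<^sup>2 \<le> (1 + \<delta>) * ((norm a)\<^sup>2 + (norm b)\<^sup>2 / \<delta>)"
    using assms by (smt (verit) divide_nonneg_pos zero_le_power2)
  then show ?thesis using assms by (simp add: divide_le_eq mult.commute)
qed

lemma shifted_smooth_upper_bound:
  fixes f :: "'a::real_inner \<Rightarrow> real"
  assumes deriv: "\<And>x. (f has_derivative (\<lambda>v. G x \<bullet> v)) (at x)"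
    and lipschitz: "\<And>x y. norm (G x - G y) \<le> L * norm (x - y)"
  shows "f y - \<nu> / 2 * (norm y)\<^sup>2 \<le> (f x - \<nu> / 2 * (norm x)\<^sup>2) + (G x - \<nu> *\<^sub>R x) \<bullet> (y - x)
    + (L - \<nu>) / 2 * (norm (y - x))\<^sup>2"
proof -
  have "(L - \<nu>) / 2 * (norm (y - x))\<^sup>2 = L / 2 * (norm (y - x))\<^sup>2 - \<nu> / 2 * (norm (y - x))\<^sup>2"
    by (simp add: field_simps)
  then show ?thesis
    using L_smooth_descent[OF deriv lipschitz, of y x] scaled_norm_power2_expand[of \<nu> y x]
      inner_diff_left[of "G x" "\<nu> *\<^sub>R x" "y - x"]
    by linarith
qed

lemma shifted_strongly_convex_tangent:
  fixes f :: "'a::real_inner \<Rightarrow> real"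
  assumes strongly_convex: "strongly_convex \<mu> f" and "\<nu> \<le> \<mu>"
    and deriv: "\<And>x. (f has_derivative (\<lambda>v. G x \<bullet> v)) (at x)"
  shows "f y - \<nu> / 2 * (norm y)\<^sup>2 \<ge> (f x - \<nu> / 2 * (norm x)\<^sup>2) + (G x - \<nu> *\<^sub>R x) \<bullet> (y - x)"
proof -
  have "((\<lambda>z. f z - \<mu> / 2 * (z \<bullet> z)) has_derivative (\<lambda>v. G x \<bullet> v - \<mu> / 2 * (x \<bullet> v + v \<bullet> x)))
      (at x)"
    by (intro has_derivative_diff deriv has_derivative_mult_right has_derivative_inner
        has_derivative_ident)
  moreover have "(\<lambda>v. G x \<bullet> v - \<mu> / 2 * (x \<bullet> v + v \<bullet> x)) = (\<lambda>v. (G x - \<mu> *\<^sub>R x) \<bullet> v)"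
    by (auto simp: inner_diff_left inner_commute algebra_simps)
  ultimately have "((\<lambda>z. f z - \<mu> / 2 * (norm z)\<^sup>2) has_derivative (\<lambda>v. (G x - \<mu> *\<^sub>R x) \<bullet> v)) (at x)"
    by (simp add: power2_norm_eq_inner)
  with strongly_convex
  have "f y - \<mu> / 2 * (norm y)\<^sup>2 \<ge> f x - \<mu> / 2 * (norm x)\<^sup>2 + (G x - \<mu> *\<^sub>R x) \<bullet> (y - x)"
    unfolding strongly_convex_def by (rule convex_on_inner_tangent)
  moreover have "\<nu> / 2 * (norm (y - x))\<^sup>2 \<le> \<mu> / 2 * (norm (y - x))\<^sup>2"
    using \<open>\<nu> \<le> \<mu>\<close> by (simp add: mult_right_mono)
  ultimately show ?thesis using scaled_norm_power2_expand[of \<mu> y x] scaled_norm_power2_expand[of \<nu> y x]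
      inner_diff_left[of "G x" "\<nu> *\<^sub>R x" "y - x"] inner_diff_left[of "G x" "\<mu> *\<^sub>R x" "y - x"]
      inner_diff_left[of "\<mu> *\<^sub>R x" "\<nu> *\<^sub>R x" "y - x"]
    by (simp add: algebra_simps)
qed

lemma L_smooth_gradients:
  assumes "\<And>j. j < N \<Longrightarrow> L_smooth L (f j)"
  obtains G where "\<And>j x. j < N \<Longrightarrow> (f j has_derivative (\<lambda>v. G j x \<bullet> v)) (at x)"
    and "\<And>j x y. j < N \<Longrightarrow> norm (G j x - G j y) \<le> L * norm (x - y)"
proof -
  have "\<forall>j\<in>{..<N}. \<exists>G. (\<forall>x. (f j has_derivative (\<lambda>v. G x \<bullet> v)) (at x))
      \<and> (\<forall>x y. norm (G x - G y) \<le> L * norm (x - y))"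
    using assms unfolding L_smooth_def by blast
  then obtain G where "\<forall>j\<in>{..<N}. (\<forall>x. (f j has_derivative (\<lambda>v. G j x \<bullet> v)) (at x))
      \<and> (\<forall>x y. norm (G j x - G j y) \<le> L * norm (x - y))"
    by (metis bchoice)
  then show thesis using that by blast
qed

section \<open>Conjugates of smooth functions\<close>

lemma conjugate_quadratic_growth:
  fixes g :: "'a::real_inner \<Rightarrow> real"
  assumes upper: "\<And>y. g y \<le> g \<theta> + d \<bullet> (y - \<theta>) + K / 2 * (norm (y - \<theta>))\<^sup>2"
    and m: "0 \<le> m" "m * K \<le> 1"
    and conj: "\<And>y. \<eta> \<bullet> y - g y \<le> \<psi>"
  shows "\<psi> \<ge> \<eta> \<bullet> \<theta> - g \<theta> + m / 2 * (norm (\<eta> - d))\<^sup>2"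
proof -
  \<comment> \<open>test the supremum at \<open>y = \<theta> + m (\<eta> - d)\<close>\<close>
  define y where "y = \<theta> + m *\<^sub>R (\<eta> - d)"
  have "g y \<le> g \<theta> + m * (d \<bullet> (\<eta> - d)) + K / 2 * m\<^sup>2 * (norm (\<eta> - d))\<^sup>2"
    using upper[of y] m by (simp add: y_def power2_eq_square mult_ac)
  moreover have "\<eta> \<bullet> y = \<eta> \<bullet> \<theta> + m * (\<eta> \<bullet> (\<eta> - d))" by (simp add: y_def inner_add_right)
  moreover have "m * (\<eta> \<bullet> (\<eta> - d)) - m * (d \<bullet> (\<eta> - d)) = m * (norm (\<eta> - d))\<^sup>2"
    by (simp add: power2_norm_eq_inner inner_diff_left right_diff_distrib[symmetric])
  moreover have "0 \<le> m * (1 - m * K) * (norm (\<eta> - d))\<^sup>2" using m by simp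
  then have "m / 2 * (norm (\<eta> - d))\<^sup>2 \<le> m * (norm (\<eta> - d))\<^sup>2 - K / 2 * m\<^sup>2 * (norm (\<eta> - d))\<^sup>2"
    by (simp add: power2_eq_square algebra_simps)
  ultimately show ?thesis using conj[of y] by linarith
qed

lemma conjugate_convex_combination_growth:
  fixes g :: "'a::real_inner \<Rightarrow> real"
  assumes upper: "\<And>y. g y \<le> g \<theta> + d \<bullet> (y - \<theta>) + K / 2 * (norm (y - \<theta>))\<^sup>2"
    and m: "0 \<le> m" "m * K \<le> 1"
    and conj1: "\<And>y. \<eta>1 \<bullet> y - g y \<le> \<psi>1" and conj2: "\<And>y. \<eta>2 \<bullet> y - g y \<le> \<psi>2"
    and w: "0 \<le> w" "w \<le> 1"
  shows "((1 - w) *\<^sub>R \<eta>1 + w *\<^sub>R \<eta>2) \<bullet> \<theta> - g \<theta> + m / 2 * (norm (((1 - w) *\<^sub>R \<eta>1 + w *\<^sub>R \<eta>2) - d))\<^sup>2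
      + m / 2 * (w * (1 - w)) * (norm (\<eta>1 - \<eta>2))\<^sup>2 \<le> (1 - w) * \<psi>1 + w * \<psi>2"
proof -
  define \<eta> where "\<eta> = (1 - w) *\<^sub>R \<eta>1 + w *\<^sub>R \<eta>2"
  have "\<eta> - d = (1 - w) *\<^sub>R (\<eta>1 - d) + w *\<^sub>R (\<eta>2 - d)" by (simp add: \<eta>_def algebra_simps)
  then have split: "(1 - w) * (norm (\<eta>1 - d))\<^sup>2 + w * (norm (\<eta>2 - d))\<^sup>2
      = (norm (\<eta> - d))\<^sup>2 + w * (1 - w) * (norm (\<eta>1 - \<eta>2))\<^sup>2"
    using norm_convex_comb_power2[of w "\<eta>1 - d" "\<eta>2 - d"] by simp
  have \<eta>_inner: "\<eta> \<bullet> \<theta> = (1 - w) * (\<eta>1 \<bullet> \<theta>) + w * (\<eta>2 \<bullet> \<theta>)"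
    by (simp add: \<eta>_def inner_add_left)
  have "\<eta> \<bullet> \<theta> - g \<theta> + m / 2 * (norm (\<eta> - d))\<^sup>2 + m / 2 * (w * (1 - w)) * (norm (\<eta>1 - \<eta>2))\<^sup>2
      = (1 - w) * (\<eta>1 \<bullet> \<theta>) + w * (\<eta>2 \<bullet> \<theta>) - g \<theta>
        + m / 2 * ((1 - w) * (norm (\<eta>1 - d))\<^sup>2 + w * (norm (\<eta>2 - d))\<^sup>2)"
    unfolding split \<eta>_inner by (simp add: field_simps)
  also have "\<dots> = (1 - w) * (\<eta>1 \<bullet> \<theta> - g \<theta> + m / 2 * (norm (\<eta>1 - d))\<^sup>2)
      + w * (\<eta>2 \<bullet> \<theta> - g \<theta> + m / 2 * (norm (\<eta>2 - d))\<^sup>2)"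
    by (simp add: field_simps)
  also have "\<dots> \<le> (1 - w) * \<psi>1 + w * \<psi>2"
    using conjugate_quadratic_growth[OF upper m conj1] conjugate_quadratic_growth[OF upper m conj2] w
    by (intro add_mono mult_left_mono) auto
  finally show ?thesis unfolding \<eta>_def .
qed

lemma inexact_dual_step_inequality:
  fixes g :: "'a::real_inner \<Rightarrow> real"
  assumes upper: "\<And>y. g y \<le> g \<theta> + d \<bullet> (y - \<theta>) + K / 2 * (norm (y - \<theta>))\<^sup>2"
    and m: "0 \<le> m" "m * K \<le> 1"
    and conj1: "\<And>y. \<eta>1 \<bullet> y - g y \<le> \<psi>1" and conj2: "\<And>y. \<eta>2 \<bullet> y - g y \<le> \<psi>2"
    and conj: "\<And>y. \<xi> \<bullet> y - g y \<le> \<psi>" and inexact: "\<psi> \<le> \<epsilon> + \<xi> \<bullet> \<theta> - g \<theta>"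
    and w: "0 \<le> w" "w \<le> 1" and \<delta>: "\<delta> > 0"
  shows "(1 - w) * \<psi>1 + w * \<psi>2 \<ge> \<psi> + \<theta> \<bullet> (((1 - w) *\<^sub>R \<eta>1 + w *\<^sub>R \<eta>2) - \<xi>) - (1 + 1 / \<delta>) * \<epsilon>
      + m / (2 * (1 + \<delta>)) * (norm (((1 - w) *\<^sub>R \<eta>1 + w *\<^sub>R \<eta>2) - \<xi>))\<^sup>2
      + m / 2 * (w * (1 - w)) * (norm (\<eta>1 - \<eta>2))\<^sup>2"
proof -
  define \<eta> where "\<eta> = (1 - w) *\<^sub>R \<eta>1 + w *\<^sub>R \<eta>2"
  have comb: "\<eta> \<bullet> \<theta> - g \<theta> + m / 2 * (norm (\<eta> - d))\<^sup>2
      + m / 2 * (w * (1 - w)) * (norm (\<eta>1 - \<eta>2))\<^sup>2 \<le> (1 - w) * \<psi>1 + w * \<psi>2"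
    unfolding \<eta>_def by (rule conjugate_convex_combination_growth[OF upper m conj1 conj2 w])
  have "\<psi> \<ge> \<xi> \<bullet> \<theta> - g \<theta> + m / 2 * (norm (\<xi> - d))\<^sup>2"
    by (rule conjugate_quadratic_growth[OF upper m conj])
  with inexact have near: "m / 2 * (norm (\<xi> - d))\<^sup>2 \<le> \<epsilon>" by linarith
  have "(norm (\<eta> - \<xi>))\<^sup>2 / (1 + \<delta>) \<le> (norm (\<eta> - d))\<^sup>2 + (norm (\<xi> - d))\<^sup>2 / \<delta>"
    using norm_add_power2_div_le[OF \<delta>, of "\<eta> - d" "d - \<xi>"] by (simp add: norm_minus_commute)
  from mult_left_mono[OF this, of "m / 2"]
  have "m / (2 * (1 + \<delta>)) * (norm (\<eta> - \<xi>))\<^sup>2 \<le> m / 2 * (norm (\<eta> - d))\<^sup>2 + (m / 2 * (norm (\<xi> - d))\<^sup>2) / \<delta>"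
    using m by (simp add: algebra_simps)
  also have "\<dots> \<le> m / 2 * (norm (\<eta> - d))\<^sup>2 + \<epsilon> / \<delta>"
    using divide_right_mono[OF near, of \<delta>] \<delta> by simp
  finally have "m / (2 * (1 + \<delta>)) * (norm (\<eta> - \<xi>))\<^sup>2 \<le> m / 2 * (norm (\<eta> - d))\<^sup>2 + \<epsilon> / \<delta>" .
  moreover have "\<theta> \<bullet> (\<eta> - \<xi>) = \<eta> \<bullet> \<theta> - \<xi> \<bullet> \<theta>" by (simp add: inner_diff_right inner_commute)
  moreover have "(1 + 1 / \<delta>) * \<epsilon> = \<epsilon> + \<epsilon> / \<delta>" by (simp add: algebra_simps)
  ultimately show ?thesis unfolding \<eta>_def[symmetric] using comb inexact by linarith
qed

lemma dualfl_gap_conjugate_bounds: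
  fixes h :: "'a::real_inner \<Rightarrow> real"
  assumes gap: "dualfl_gap \<nu> h z \<theta> \<le> ereal \<epsilon>" and \<nu>: "\<nu> > 0"
  defines "g \<equiv> \<lambda>x. h x - \<nu> / 2 * (norm x)\<^sup>2"
  defines "\<xi> \<equiv> \<nu> *\<^sub>R (z - \<theta>)"
  shows "real_of_ereal (fconj g \<xi>) \<le> \<epsilon> + \<xi> \<bullet> \<theta> - g \<theta>"
    and "\<And>y. \<xi> \<bullet> y - g y \<le> real_of_ereal (fconj g \<xi>)"
proof -
  have lower: "ereal (\<xi> \<bullet> y - g y) \<le> fconj g \<xi>" for y
    unfolding fconj_def by (rule SUP_upper) auto
  have "1 / (2 * \<nu>) * (norm (\<nu> *\<^sub>R (z - \<theta>) - \<nu> *\<^sub>R z))\<^sup>2 = \<nu> / 2 * (norm \<theta>)\<^sup>2"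
    using \<nu> by (simp add: algebra_simps power_mult_distrib power2_eq_square)
  then have gap_eq: "dualfl_gap \<nu> h z \<theta>
      = ereal (h \<theta> - \<nu> * (z \<bullet> \<theta>)) + (fconj g \<xi> + ereal (\<nu> / 2 * (norm \<theta>)\<^sup>2))"
    unfolding dualfl_gap_def g_def \<xi>_def by (simp only:)
  have "fconj g \<xi> \<noteq> \<infinity>"
  proof
    assume "fconj g \<xi> = \<infinity>"
    with gap show False unfolding gap_eq by simp
  qed
  moreover have "fconj g \<xi> \<noteq> - \<infinity>" using lower[of 0] by auto
  ultimately obtain r where r: "fconj g \<xi> = ereal r" by (cases "fconj g \<xi>") auto
  have "h \<theta> - \<nu> * (z \<bullet> \<theta>) + (r + \<nu> / 2 * (norm \<theta>)\<^sup>2) \<le> \<epsilon>"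
    using gap unfolding gap_eq r by simp
  moreover have "\<xi> \<bullet> \<theta> - g \<theta> = \<nu> * (z \<bullet> \<theta>) - h \<theta> - \<nu> / 2 * (norm \<theta>)\<^sup>2"
    unfolding \<xi>_def g_def by (simp add: inner_diff_left power2_norm_eq_inner algebra_simps)
  ultimately show "real_of_ereal (fconj g \<xi>) \<le> \<epsilon> + \<xi> \<bullet> \<theta> - g \<theta>" using r by simp
  show "\<xi> \<bullet> y - g y \<le> real_of_ereal (fconj g \<xi>)" for y using lower[of y] r by simp
qed

section \<open>The momentum sequence\<close>

lemma dualfl_t_Suc_sq:
  "(dualfl_t \<rho> (Suc n))\<^sup>2 - dualfl_t \<rho> (Suc n) = (dualfl_t \<rho> n)\<^sup>2 * (1 - \<rho> * dualfl_t \<rho> (Suc n))"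
proof -
  define t where "t = dualfl_t \<rho> n"
  define b where "b = 1 - \<rho> * t\<^sup>2"
  define r where "r = sqrt (b\<^sup>2 + 4 * t\<^sup>2)"
  have "r\<^sup>2 = b\<^sup>2 + 4 * t\<^sup>2" unfolding r_def by simp
  then have "4 * (((b + r) / 2)\<^sup>2 - (b + r) / 2) = 4 * (t\<^sup>2 * (1 - \<rho> * ((b + r) / 2)))"
    unfolding b_def power2_eq_square by (simp add: field_simps)
  then have "((b + r) / 2)\<^sup>2 - (b + r) / 2 = t\<^sup>2 * (1 - \<rho> * ((b + r) / 2))"
    by (metis mult_left_cancel zero_neq_numeral)
  moreover have "dualfl_t \<rho> (Suc n) = (b + r) / 2" by (simp add: t_def b_def r_def Let_def)
  ultimately show ?thesis by (simp only: t_def)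
qed

lemma dualfl_t_ge_1:
  assumes "0 \<le> \<rho>" "\<rho> \<le> 1"
  shows "dualfl_t \<rho> n \<ge> 1"
proof (induction n)
  case (Suc n)
  define t where "t = dualfl_t \<rho> n"
  define b where "b = 1 - \<rho> * t\<^sup>2"
  have "2 - b \<le> sqrt (b\<^sup>2 + 4 * t\<^sup>2)"
  proof (cases "2 - b \<le> 0")
    case False
    have "\<rho> * t\<^sup>2 \<le> t\<^sup>2" using assms by (simp add: mult_left_le_one_le)
    then have "(2 - b)\<^sup>2 \<le> b\<^sup>2 + 4 * t\<^sup>2" by (simp add: b_def power2_eq_square algebra_simps)
    then show ?thesis using False by (intro real_le_rsqrt) auto
  next
    case True
    moreover have "0 \<le> sqrt (b\<^sup>2 + 4 * t\<^sup>2)" by simp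
    ultimately show ?thesis by linarith
  qed
  then show ?case by (simp add: t_def b_def Let_def)
qed simp

lemma dualfl_t_sq_le:
  assumes "0 \<le> \<rho>" "\<rho> \<le> 1"
  shows "\<rho> * (dualfl_t \<rho> n)\<^sup>2 \<le> 1"
proof (induction n)
  case 0 then show ?case using assms by simp
next
  case (Suc n)
  define t where "t = dualfl_t \<rho> n"
  define t' where "t' = dualfl_t \<rho> (Suc n)"
  have rec: "t'\<^sup>2 - t' = t\<^sup>2 * (1 - \<rho> * t')" unfolding t_def t'_def by (rule dualfl_t_Suc_sq)
  have "t' \<ge> 1" unfolding t'_def by (rule dualfl_t_ge_1[OF assms])
  have "\<rho> * t'\<^sup>2 \<le> 1"
  proof (cases "\<rho> * t' \<le> 1")
    case True
    have "\<rho> * (t'\<^sup>2 - t') = (\<rho> * t\<^sup>2) * (1 - \<rho> * t')" using rec by simp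
    also have "\<dots> \<le> 1 - \<rho> * t'"
      using mult_right_mono[of "\<rho> * t\<^sup>2" 1 "1 - \<rho> * t'"] Suc True unfolding t_def by simp
    finally show ?thesis by (simp add: algebra_simps)
  next
    case False
    moreover have "\<rho> * t' \<le> t'" using assms \<open>t' \<ge> 1\<close> by (simp add: mult_left_le_one_le)
    ultimately have "t' * (t' - 1) > 0" by simp
    then have "t'\<^sup>2 - t' > 0" by (simp add: power2_eq_square algebra_simps)
    moreover have "t\<^sup>2 * (1 - \<rho> * t') \<le> 0" using False by (intro mult_nonneg_nonpos) auto
    ultimately show ?thesis using rec by linarith
  qed
  then show ?case by (simp only: t'_def)
qed

lemma dualfl_t_contraction:
  assumes "0 \<le> \<rho>" "\<rho> \<le> 1"
  shows "\<rho> * dualfl_t \<rho> n \<le> 1" and "1 - 1 / dualfl_t \<rho> n \<le> 1 - sqrt \<rho>"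
proof -
  define t where "t = dualfl_t \<rho> n"
  have "t \<ge> 1" unfolding t_def by (rule dualfl_t_ge_1[OF assms])
  have sq: "\<rho> * t\<^sup>2 \<le> 1" unfolding t_def by (rule dualfl_t_sq_le[OF assms])
  have "\<rho> * t \<le> \<rho> * t\<^sup>2" using \<open>t \<ge> 1\<close> assms by (intro mult_left_mono) (auto simp: power2_eq_square)
  with sq show "\<rho> * dualfl_t \<rho> n \<le> 1" unfolding t_def by simp
  have "sqrt \<rho> * t = sqrt (\<rho> * t\<^sup>2)" using \<open>t \<ge> 1\<close> by (simp add: real_sqrt_mult)
  also have "\<dots> \<le> 1" using sq by simp
  finally have "sqrt \<rho> \<le> 1 / t" using \<open>t \<ge> 1\<close> by (simp add: pos_le_divide_eq)
  then show "1 - 1 / dualfl_t \<rho> n \<le> 1 - sqrt \<rho>" unfolding t_def by linarith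
qed

lemma dualfl_t_le:
  assumes "0 \<le> \<rho>" "\<rho> \<le> 1"
  shows "dualfl_t \<rho> n \<le> real n + 1"
proof (induction n)
  case (Suc n)
  define t where "t = dualfl_t \<rho> n"
  define t' where "t' = dualfl_t \<rho> (Suc n)"
  have "t \<ge> 1" "t' \<ge> 1" unfolding t_def t'_def by (rule dualfl_t_ge_1[OF assms])+
  have "t'\<^sup>2 - t' = t\<^sup>2 * (1 - \<rho> * t')" unfolding t_def t'_def by (rule dualfl_t_Suc_sq)
  also have "\<dots> \<le> t\<^sup>2" using assms \<open>t' \<ge> 1\<close> by (simp add: mult_left_le)
  finally have "(t' - 1/2)\<^sup>2 \<le> (t + 1/2)\<^sup>2" using \<open>t \<ge> 1\<close> by (simp add: power2_eq_square algebra_simps)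
  then have "t' - 1/2 \<le> t + 1/2" using \<open>t \<ge> 1\<close> by (simp add: power2_le_iff_abs_le)
  with Suc show ?case unfolding t_def t'_def by simp
qed simp

section \<open>Perturbed linear recursions\<close>

lemma perturbed_recursion_prod_bound:
  fixes W T \<delta> \<eta> a e :: "nat \<Rightarrow> real"
  assumes rec: "\<And>k. W (Suc k) \<le> (1 + \<delta> k) * a k * W k + e k"
    and a: "\<And>k. 0 \<le> a k" "\<And>k. a k * T k \<le> T (Suc k)" and \<delta>: "\<And>k. 0 \<le> \<delta> k"
    and e: "\<And>k. e k \<le> \<eta> k * T (Suc k)" and \<eta>: "\<And>k. 0 \<le> \<eta> k" and T: "\<And>k. T k > 0"
    and W0: "W 0 \<le> C0 * T 0" and "C0 \<ge> 0"
  shows "W k \<le> (C0 + (\<Sum>i<k. \<eta> i)) * (\<Prod>i<k. 1 + \<delta> i) * T k"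
proof (induction k)
  case 0 then show ?case using W0 by simp
next
  case (Suc k)
  define C where "C = C0 + (\<Sum>i<k. \<eta> i)"
  define P where "P = (\<Prod>i<k. 1 + \<delta> i)"
  have "C \<ge> 0" unfolding C_def using \<open>C0 \<ge> 0\<close> \<eta> by (simp add: sum_nonneg)
  have "P \<ge> 1" unfolding P_def using \<delta> by (intro prod_ge_1) auto
  have "1 * 1 \<le> (1 + \<delta> k) * P" using \<open>P \<ge> 1\<close> \<delta>[of k] by (intro mult_mono) auto
  then have "\<eta> k * 1 \<le> \<eta> k * ((1 + \<delta> k) * P)" using \<eta>[of k] by (intro mult_left_mono) auto
  then have err: "\<eta> k * T (Suc k) \<le> \<eta> k * ((1 + \<delta> k) * P) * T (Suc k)"
    using T[of "Suc k"] by (intro mult_right_mono) auto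
  have "W (Suc k) \<le> (1 + \<delta> k) * a k * (C * P * T k) + \<eta> k * T (Suc k)"
    using Suc a(1)[of k] \<delta>[of k] e[of k] unfolding C_def P_def
    by (intro order_trans[OF rec[of k]] add_mono mult_left_mono) auto
  also have "(1 + \<delta> k) * a k * (C * P * T k) = ((1 + \<delta> k) * C * P) * (a k * T k)" by simp
  also have "\<dots> \<le> ((1 + \<delta> k) * C * P) * T (Suc k)"
    using \<open>C \<ge> 0\<close> \<open>P \<ge> 1\<close> \<delta>[of k] by (intro mult_left_mono a(2)) auto
  also note err
  finally show ?case by (simp add: C_def P_def algebra_simps)
qed

lemma perturbed_recursion_bound:
  fixes W T \<delta> \<eta> a e :: "nat \<Rightarrow> real"
  assumes rec: "\<And>k. W (Suc k) \<le> (1 + \<delta> k) * a k * W k + e k"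
    and a: "\<And>k. 0 \<le> a k" "\<And>k. a k * T k \<le> T (Suc k)" and \<delta>: "\<And>k. 0 \<le> \<delta> k"
    and e: "\<And>k. e k \<le> \<eta> k * T (Suc k)" and \<eta>: "\<And>k. 0 \<le> \<eta> k" and T: "\<And>k. T k > 0"
    and D: "\<And>k. (\<Sum>i<k. \<delta> i) \<le> D" and H: "\<And>k. (\<Sum>i<k. \<eta> i) \<le> H"
    and W0: "W 0 \<le> C0 * T 0" and "C0 \<ge> 0"
  shows "W k \<le> (C0 + H) * exp D * T k"
proof -
  have "(\<Prod>i<k. 1 + \<delta> i) \<le> exp (\<Sum>i<k. \<delta> i)"
    unfolding exp_sum[OF finite_lessThan] using \<delta>
    by (intro prod_mono) (auto simp: add_nonneg_nonneg exp_ge_add_one_self)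
  also have "\<dots> \<le> exp D" using D by simp
  finally have "(\<Prod>i<k. 1 + \<delta> i) \<le> exp D" .
  moreover have "0 \<le> C0 + (\<Sum>i<k. \<eta> i)" using \<open>C0 \<ge> 0\<close> \<eta> by (simp add: sum_nonneg)
  moreover have "0 \<le> (\<Prod>i<k. 1 + \<delta> i)" using \<delta> by (simp add: prod_nonneg)
  ultimately have "(C0 + (\<Sum>i<k. \<eta> i)) * (\<Prod>i<k. 1 + \<delta> i) * T k \<le> (C0 + H) * exp D * T k"
    using H[of k] T[of k] by (intro mult_right_mono mult_mono) auto
  with perturbed_recursion_prod_bound[OF rec a \<delta> e \<eta> T W0 \<open>C0 \<ge> 0\<close>, where k=k]
  show ?thesis by linarith
qed

lemma sum_power_le:
  fixes q :: real assumes "0 \<le> q" "q < 1"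
  shows "(\<Sum>i<k. q ^ i) \<le> 1 / (1 - q)"
proof -
  have "(\<Sum>i<k. q ^ i) = (1 - q ^ k) / (1 - q)" using assms by (simp add: sum_gp_strict)
  also have "\<dots> \<le> 1 / (1 - q)" using assms by (intro divide_right_mono) auto
  finally show ?thesis .
qed

lemma sum_Suc_mult_power_le:
  fixes q :: real assumes q: "0 \<le> q" "q < 1"
  shows "(\<Sum>i<k. (real i + 1) * q ^ i) \<le> 1 / (1 - q)\<^sup>2"
proof -
  have closed_form:
    "(\<Sum>i<k. (real i + 1) * q ^ i) * (1 - q)\<^sup>2 = 1 - (real k + 1) * q ^ k + real k * q ^ Suc k" for k
  proof (induction k)
    case (Suc k)
    then show ?case by (simp add: power2_eq_square algebra_simps)
  qed simp
  have "real k * q \<le> real k" using q by (intro mult_right_le_one_le) auto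
  then have "0 \<le> q ^ k * (real k + 1 - real k * q)" using q by (intro mult_nonneg_nonneg) auto
  then have "(\<Sum>i<k. (real i + 1) * q ^ i) * (1 - q)\<^sup>2 \<le> 1"
    unfolding closed_form by (simp add: algebra_simps)
  then show ?thesis using q by (simp add: le_divide_eq)
qed

lemma power_bound_from_1:
  fixes a :: "nat \<Rightarrow> real"
  assumes "0 \<le> r" and bound: "\<And>n. n \<ge> 1 \<Longrightarrow> a n \<le> C * r ^ n"
  shows "\<exists>C'>0. \<forall>n. a n \<le> C' * r ^ n"
proof (intro exI conjI allI)
  show "max 1 (max (a 0) C) > 0" by simp
  show "a n \<le> max 1 (max (a 0) C) * r ^ n" for n
  proof (cases "n = 0")
    case False
    then have "a n \<le> C * r ^ n" using bound by simp
    also have "\<dots> \<le> max 1 (max (a 0) C) * r ^ n" using \<open>0 \<le> r\<close> by (intro mult_right_mono) auto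
    finally show ?thesis .
  qed simp
qed

section \<open>One step of the dual Lyapunov estimate\<close>

lemma server_step_identity:
  fixes \<xi> y \<theta> x :: "nat \<Rightarrow> 'a::real_inner" and c :: 'a
  assumes \<nu>: "\<nu> > 0" and \<xi>: "\<And>j. j < N \<Longrightarrow> \<xi> j = y j + \<nu> *\<^sub>R c - \<nu> *\<^sub>R \<theta> j"
  shows "(\<Sum>j<N. \<theta> j \<bullet> (x j - \<xi> j))
      + 1 / (2 * \<nu>) * ((\<Sum>j<N. (norm (x j - y j))\<^sup>2) - (\<Sum>j<N. (norm (x j - \<xi> j))\<^sup>2))
    = c \<bullet> (\<Sum>j<N. x j - \<xi> j) + 1 / (2 * \<nu>) * (\<Sum>j<N. (norm (\<nu> *\<^sub>R (c - \<theta> j)))\<^sup>2)"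
proof -
  have term_eq: "\<theta> j \<bullet> (x j - \<xi> j) + 1 / (2 * \<nu>) * ((norm (x j - y j))\<^sup>2 - (norm (x j - \<xi> j))\<^sup>2)
      = c \<bullet> (x j - \<xi> j) + 1 / (2 * \<nu>) * (norm (\<nu> *\<^sub>R (c - \<theta> j)))\<^sup>2" if "j < N" for j
  proof -
    define a where "a = x j - \<xi> j"
    define b where "b = \<nu> *\<^sub>R (c - \<theta> j)"
    have xy: "x j - y j = a + b" using \<xi>[OF that] by (simp add: a_def b_def algebra_simps)
    have \<theta>a: "\<theta> j \<bullet> a = c \<bullet> a - (a \<bullet> b) / \<nu>"
      using \<nu> by (simp add: b_def inner_diff_right inner_commute)
    have "(norm (a + b))\<^sup>2 - (norm a)\<^sup>2 = 2 * (a \<bullet> b) + (norm b)\<^sup>2"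
      by (simp add: power2_norm_eq_inner inner_add_left inner_add_right inner_commute)
    then show ?thesis unfolding a_def[symmetric] b_def[symmetric] xy \<theta>a using \<nu>
      by (simp add: field_simps)
  qed
  have "(\<Sum>j<N. \<theta> j \<bullet> (x j - \<xi> j))
      + 1 / (2 * \<nu>) * ((\<Sum>j<N. (norm (x j - y j))\<^sup>2) - (\<Sum>j<N. (norm (x j - \<xi> j))\<^sup>2))
      = (\<Sum>j<N. \<theta> j \<bullet> (x j - \<xi> j) + 1 / (2 * \<nu>) * ((norm (x j - y j))\<^sup>2 - (norm (x j - \<xi> j))\<^sup>2))"
    by (simp add: sum.distrib sum_subtractf flip: sum_divide_distrib)
  also have "\<dots> = (\<Sum>j<N. c \<bullet> (x j - \<xi> j) + 1 / (2 * \<nu>) * (norm (\<nu> *\<^sub>R (c - \<theta> j)))\<^sup>2)"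
    using term_eq by simp
  finally show ?thesis by (simp add: sum.distrib inner_sum_right sum_distrib_left)
qed

lemma server_step_inequality:
  fixes \<xi> y \<theta> x :: "nat \<Rightarrow> 'a::real_inner" and X \<Theta> c :: 'a
  assumes N: "N > 0" and \<nu>: "\<nu> > 0"
    and \<xi>: "\<And>j. j < N \<Longrightarrow> \<xi> j = y j + \<nu> *\<^sub>R c - \<nu> *\<^sub>R \<theta> j"
    and sum_\<theta>: "(\<Sum>j<N. \<theta> j) = real N *\<^sub>R \<Theta>"
    and sum_x: "(\<Sum>j<N. x j) = - (real N * \<nu>) *\<^sub>R X"
    and sum_\<xi>: "(\<Sum>j<N. \<xi> j) = - (real N * \<nu>) *\<^sub>R \<Theta>"
    and Q: "Q \<ge> (norm X)\<^sup>2"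
  shows "(\<Sum>j<N. \<theta> j \<bullet> (x j - \<xi> j))
      + 1 / (2 * \<nu>) * ((\<Sum>j<N. (norm (x j - y j))\<^sup>2) - (\<Sum>j<N. (norm (x j - \<xi> j))\<^sup>2))
      + real N * \<nu> / 2 * (Q - (norm \<Theta>)\<^sup>2) \<ge> 0"
proof -
  have "(\<Sum>j<N. \<nu> *\<^sub>R (c - \<theta> j)) = (real N * \<nu>) *\<^sub>R (c - \<Theta>)"
    unfolding scaleR_sum_right[symmetric] sum_subtractf sum_\<theta>
    by (simp add: algebra_simps sum_constant_scaleR)
  then have "real N * (real N * \<nu>\<^sup>2 * (norm (c - \<Theta>))\<^sup>2) \<le> real N * (\<Sum>j<N. (norm (\<nu> *\<^sub>R (c - \<theta> j)))\<^sup>2)"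
    using norm_sum_power2_le[of "\<lambda>j. \<nu> *\<^sub>R (c - \<theta> j)" N] \<nu>
    by (simp add: power_mult_distrib power2_eq_square mult_ac)
  then have sum_sq: "real N * \<nu>\<^sup>2 * (norm (c - \<Theta>))\<^sup>2 \<le> (\<Sum>j<N. (norm (\<nu> *\<^sub>R (c - \<theta> j)))\<^sup>2)"
    using N by simp
  have sum_diff: "(\<Sum>j<N. x j - \<xi> j) = - (real N * \<nu>) *\<^sub>R (X - \<Theta>)"
    unfolding sum_subtractf sum_x sum_\<xi> by (simp add: algebra_simps)
  have "0 \<le> real N * \<nu> / 2 * (norm (X - c))\<^sup>2" using \<nu> by simp
  also have "\<dots> = - (real N * \<nu>) * (c \<bullet> (X - \<Theta>)) + 1 / (2 * \<nu>) * (real N * \<nu>\<^sup>2 * (norm (c - \<Theta>))\<^sup>2)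
      + real N * \<nu> / 2 * ((norm X)\<^sup>2 - (norm \<Theta>)\<^sup>2)"
  proof -
    have n1: "(norm (X - c))\<^sup>2 = (norm X)\<^sup>2 - 2 * (c \<bullet> X) + (norm c)\<^sup>2"
      and n2: "(norm (c - \<Theta>))\<^sup>2 = (norm c)\<^sup>2 - 2 * (c \<bullet> \<Theta>) + (norm \<Theta>)\<^sup>2"
      by (simp_all add: power2_norm_eq_inner inner_diff_left inner_diff_right inner_commute)
    show ?thesis unfolding n1 n2 using \<nu> by (simp add: inner_diff_right field_simps power2_eq_square)
  qed
  also have "\<dots> \<le> c \<bullet> (\<Sum>j<N. x j - \<xi> j) + 1 / (2 * \<nu>) * (\<Sum>j<N. (norm (\<nu> *\<^sub>R (c - \<theta> j)))\<^sup>2)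
      + real N * \<nu> / 2 * (Q - (norm \<Theta>)\<^sup>2)"
    unfolding sum_diff using sum_sq Q \<nu> N by (intro add_mono mult_left_mono) auto
  finally show ?thesis
    using server_step_identity[where N=N and \<xi>=\<xi> and y=y and c=c and \<theta>=\<theta> and x=x, OF \<nu> \<xi>]
    by linarith
qed

lemma extrapolation_dist_bound:
  fixes xk xk' xs :: "'a::real_inner"
  assumes "t > 0" "0 \<le> a" "a \<le> 1" "t * \<beta> = a * (t' - 1)"
  shows "(norm (((1 - 1 / t) *\<^sub>R xk + (1 / t) *\<^sub>R xs) - ((1 + \<beta>) *\<^sub>R xk - \<beta> *\<^sub>R xk')))\<^sup>2
    \<le> ((1 - a) * (norm (xk - xs))\<^sup>2 + a * (norm (xk' + t' *\<^sub>R (xk - xk') - xs))\<^sup>2) / t\<^sup>2"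
proof -
  define u where "u = xk' + t' *\<^sub>R (xk - xk')"
  define w where "w = 1 / t"
  have "t * w = 1" using \<open>t > 0\<close> by (simp add: w_def)
  have "t *\<^sub>R (((1 - w) *\<^sub>R xk + w *\<^sub>R xs) - ((1 + \<beta>) *\<^sub>R xk - \<beta> *\<^sub>R xk'))
      = (t - t * w) *\<^sub>R xk + (t * w) *\<^sub>R xs - (t + t * \<beta>) *\<^sub>R xk + (t * \<beta>) *\<^sub>R xk'"
    by (simp add: algebra_simps)
  also have "\<dots> = (1 - a) *\<^sub>R (xs - xk) + a *\<^sub>R (xs - u)"
    unfolding \<open>t * w = 1\<close> \<open>t * \<beta> = a * (t' - 1)\<close> u_def by (simp add: algebra_simps)
  finally have scaled: "t *\<^sub>R (((1 - w) *\<^sub>R xk + w *\<^sub>R xs) - ((1 + \<beta>) *\<^sub>R xk - \<beta> *\<^sub>R xk'))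
      = (1 - a) *\<^sub>R (xs - xk) + a *\<^sub>R (xs - u)" .
  have "((1 - w) *\<^sub>R xk + w *\<^sub>R xs) - ((1 + \<beta>) *\<^sub>R xk - \<beta> *\<^sub>R xk')
      = (1 / t) *\<^sub>R (t *\<^sub>R (((1 - w) *\<^sub>R xk + w *\<^sub>R xs) - ((1 + \<beta>) *\<^sub>R xk - \<beta> *\<^sub>R xk')))"
    using \<open>t > 0\<close> by simp
  then have "((1 - 1 / t) *\<^sub>R xk + (1 / t) *\<^sub>R xs) - ((1 + \<beta>) *\<^sub>R xk - \<beta> *\<^sub>R xk')
      = (1 / t) *\<^sub>R ((1 - a) *\<^sub>R (xs - xk) + a *\<^sub>R (xs - u))"
    unfolding scaled by (simp only: w_def)
  then have "(norm (((1 - 1 / t) *\<^sub>R xk + (1 / t) *\<^sub>R xs) - ((1 + \<beta>) *\<^sub>R xk - \<beta> *\<^sub>R xk')))\<^sup>2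
      = (norm ((1 - a) *\<^sub>R (xs - xk) + a *\<^sub>R (xs - u)))\<^sup>2 / t\<^sup>2"
    by (simp add: power_mult_distrib power_divide)
  also have "\<dots> \<le> ((1 - a) * (norm (xs - xk))\<^sup>2 + a * (norm (xs - u))\<^sup>2) / t\<^sup>2"
    using norm_convex_comb_power2[of a "xs - xk" "xs - u"] assms
    by (intro divide_right_mono) (auto simp: mult_nonneg_nonneg)
  finally show ?thesis by (simp add: u_def norm_minus_commute)
qed

lemma momentum_dist_eq:
  fixes xk xp xs :: "'a::real_inner"
  assumes "t \<noteq> 0"
  shows "(norm (((1 - 1 / t) *\<^sub>R xk + (1 / t) *\<^sub>R xs) - xp))\<^sup>2
    = (norm (xk + t *\<^sub>R (xp - xk) - xs))\<^sup>2 / t\<^sup>2"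
proof -
  have "xk + t *\<^sub>R (xp - xk) - xs = - t *\<^sub>R (((1 - 1 / t) *\<^sub>R xk + (1 / t) *\<^sub>R xs) - xp)"
    using assms by (simp add: algebra_simps)
  then show ?thesis using assms by (simp add: power_mult_distrib)
qed

lemma dualfl_lyapunov_coefficients:
  fixes \<nu> \<rho> t t' \<delta> :: real
  assumes \<nu>: "\<nu> > 0" and \<rho>: "0 \<le> \<rho>" "\<rho> < 1" and t: "t \<ge> 1" "t' \<ge> 1"
    and rec: "t\<^sup>2 - t = t'\<^sup>2 * (1 - \<rho> * t)" and \<delta>: "\<delta> > 0"
  defines "m \<equiv> \<rho> / (\<nu> * (1 - \<rho>))" and "a \<equiv> (1 - t * \<rho>) / (1 - \<rho>)"
  shows "1 / (2 * \<nu>) * (1 - a) / t\<^sup>2 = m / 2 * (1 / t * (1 - 1 / t))"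
    and "1 / (2 * \<nu>) * a / t\<^sup>2 = 1 / (2 * \<nu> * (1 - \<rho>)) * (1 - 1 / t) / t'\<^sup>2"
    and "1 / (2 * \<nu> * (1 - \<rho>)) / (1 + \<delta>) \<le> 1 / (2 * \<nu>) + m / (2 * (1 + \<delta>))"
proof -
  have "1 - a = \<rho> * (t - 1) / (1 - \<rho>)" using \<rho> by (simp add: a_def field_simps)
  then show "1 / (2 * \<nu>) * (1 - a) / t\<^sup>2 = m / 2 * (1 / t * (1 - 1 / t))"
    unfolding m_def using t \<nu> \<rho> by (simp only:) (simp add: field_simps power2_eq_square)
  have "1 - \<rho> * t = (t\<^sup>2 - t) / t'\<^sup>2" using rec t by simp
  then have "(1 - \<rho> * t) / t\<^sup>2 = (t\<^sup>2 - t) / (t'\<^sup>2 * t\<^sup>2)" by simp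
  also have "\<dots> = (1 - 1 / t) / t'\<^sup>2" using t by (simp add: field_simps power2_eq_square)
  finally have "(1 - \<rho> * t) / t\<^sup>2 = (1 - 1 / t) / t'\<^sup>2" .
  moreover have "1 / (2 * \<nu>) * a / t\<^sup>2 = 1 / (2 * \<nu> * (1 - \<rho>)) * ((1 - \<rho> * t) / t\<^sup>2)"
    using \<rho> \<nu> by (simp add: a_def field_simps mult.commute)
  ultimately show "1 / (2 * \<nu>) * a / t\<^sup>2 = 1 / (2 * \<nu> * (1 - \<rho>)) * (1 - 1 / t) / t'\<^sup>2"
    by simp
  have "1 / (2 * \<nu> * (1 - \<rho>)) = 1 / (2 * \<nu>) + m / 2" using \<rho> \<nu> by (simp add: m_def field_simps)
  moreover have "1 / (2 * \<nu>) / (1 + \<delta>) \<le> 1 / (2 * \<nu>)" using \<delta> \<nu> by (simp add: divide_le_eq)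
  ultimately show "1 / (2 * \<nu> * (1 - \<rho>)) / (1 + \<delta>) \<le> 1 / (2 * \<nu>) + m / (2 * (1 + \<delta>))"
    by (simp add: add_divide_distrib)
qed

lemma dualfl_lyapunov_step_arith:
  fixes \<Psi>k \<Psi>s \<Psi>p Pk Ps Pp Sth Sy Sp A B U Err c c0 c1 m w a t t' \<delta> :: real
  assumes client: "(1 - w) * \<Psi>k + w * \<Psi>s
      \<ge> \<Psi>p + Sth - Err + m / (2 * (1 + \<delta>)) * Sp + m / 2 * (w * (1 - w)) * B"
    and server: "Sth + c0 * (Sy - Sp) + c * ((1 - w) * Pk + w * Ps - Pp) \<ge> 0"
    and Sy: "Sy \<le> 1 / t\<^sup>2 * ((1 - a) * B + a * A)" and Sp: "Sp = U / t\<^sup>2"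
    and K1: "c0 * (1 - a) / t\<^sup>2 = m / 2 * (w * (1 - w))"
    and K2: "c0 * a / t\<^sup>2 = c1 * (1 - w) / t'\<^sup>2"
    and K3: "c1 / (1 + \<delta>) \<le> c0 + m / (2 * (1 + \<delta>))"
    and pos: "c0 \<ge> 0" "\<delta> > 0" "U \<ge> 0"
    and gap: "\<Psi>p + c * Pp - (\<Psi>s + c * Ps) \<ge> 0"
  shows "(\<Psi>p + c * Pp - (\<Psi>s + c * Ps)) + c1 * U / t\<^sup>2
    \<le> (1 + \<delta>) * ((1 - w) * ((\<Psi>k + c * Pk - (\<Psi>s + c * Ps)) + c1 * A / t'\<^sup>2) + Err)"
proof -
  define Fk where "Fk = \<Psi>k + c * Pk"
  define Fs where "Fs = \<Psi>s + c * Ps"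
  define Fp where "Fp = \<Psi>p + c * Pp"
  have "(1 - w) * Fk + w * Fs = (1 - w) * \<Psi>k + w * \<Psi>s + c * ((1 - w) * Pk + w * Ps)"
    unfolding Fk_def Fs_def by (simp add: algebra_simps)
  moreover have "c0 * (Sy - Sp) = c0 * Sy - c0 * Sp"
    and "c * ((1 - w) * Pk + w * Ps - Pp) = c * ((1 - w) * Pk + w * Ps) - c * Pp"
    by (rule right_diff_distrib)+
  ultimately have base: "(1 - w) * Fk + w * Fs + c0 * Sy \<ge> Fp + c0 * Sp + m / (2 * (1 + \<delta>)) * Sp - Err
      + m / 2 * (w * (1 - w)) * B"
    using client server unfolding Fp_def by linarith
  have "c0 * Sy \<le> c0 * (1 / t\<^sup>2 * ((1 - a) * B + a * A))" using Sy pos by (intro mult_left_mono) auto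
  also have "\<dots> = (c0 * (1 - a) / t\<^sup>2) * B + (c0 * a / t\<^sup>2) * A"
    by (simp add: algebra_simps add_divide_distrib diff_divide_distrib)
  finally have "c0 * Sy \<le> m / 2 * (w * (1 - w)) * B + c1 * (1 - w) / t'\<^sup>2 * A" unfolding K1 K2 .
  moreover have "c1 / (1 + \<delta>) * (U / t\<^sup>2) \<le> (c0 + m / (2 * (1 + \<delta>))) * (U / t\<^sup>2)"
    using K3 pos by (intro mult_right_mono) auto
  ultimately have "(Fp - Fs) + c1 / (1 + \<delta>) * (U / t\<^sup>2)
      \<le> (1 - w) * (Fk - Fs) + c1 * (1 - w) / t'\<^sup>2 * A + Err"
    using base Sp by (simp add: algebra_simps)
  then have "(1 + \<delta>) * ((Fp - Fs) + c1 / (1 + \<delta>) * (U / t\<^sup>2))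
      \<le> (1 + \<delta>) * ((1 - w) * ((Fk - Fs) + c1 * A / t'\<^sup>2) + Err)"
    using pos by (intro mult_left_mono) (auto simp: algebra_simps)
  moreover have "(1 + \<delta>) * (c1 / (1 + \<delta>) * (U / t\<^sup>2)) = c1 * U / t\<^sup>2" using pos by simp
  moreover have "Fp - Fs \<le> (1 + \<delta>) * (Fp - Fs)"
    using pos gap mult_nonneg_nonneg[of \<delta> "Fp - Fs"] unfolding Fp_def Fs_def by (simp add: algebra_simps)
  ultimately show ?thesis unfolding Fk_def Fs_def Fp_def by (simp add: distrib_left)
qed

lemma dualfl_lyapunov_step:
  fixes \<xi>k \<xi>k' \<xi>p \<xi>s \<theta> :: "nat \<Rightarrow> 'a::real_inner" and \<Theta>k \<Theta>s \<Theta>p c :: 'a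
    and \<Psi>k \<Psi>s \<Psi>p \<epsilon> \<delta> \<nu> \<rho> t t' \<beta> m :: real
  assumes N: "N > 0" and \<nu>: "\<nu> > 0" and \<rho>: "0 \<le> \<rho>" "\<rho> < 1"
    and t: "t \<ge> 1" "t' \<ge> 1" "\<rho> * t \<le> 1" and rec: "t\<^sup>2 - t = t'\<^sup>2 * (1 - \<rho> * t)"
    and \<beta>: "\<beta> = (t' - 1) / t * ((1 - t * \<rho>) / (1 - \<rho>))"
    and \<delta>: "\<delta> > 0" and m: "m = \<rho> / (\<nu> * (1 - \<rho>))"
    and \<xi>p: "\<And>j. j < N \<Longrightarrow> \<xi>p j = ((1 + \<beta>) *\<^sub>R \<xi>k j - \<beta> *\<^sub>R \<xi>k' j) + \<nu> *\<^sub>R c - \<nu> *\<^sub>R \<theta> j"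
    and sum_\<theta>: "(\<Sum>j<N. \<theta> j) = real N *\<^sub>R \<Theta>p"
    and sum_k: "(\<Sum>j<N. \<xi>k j) = - (real N * \<nu>) *\<^sub>R \<Theta>k"
    and sum_s: "(\<Sum>j<N. \<xi>s j) = - (real N * \<nu>) *\<^sub>R \<Theta>s"
    and sum_p: "(\<Sum>j<N. \<xi>p j) = - (real N * \<nu>) *\<^sub>R \<Theta>p"
    and client: "(1 - 1 / t) * \<Psi>k + (1 / t) * \<Psi>s \<ge> \<Psi>p
        + (\<Sum>j<N. \<theta> j \<bullet> (((1 - 1 / t) *\<^sub>R \<xi>k j + (1 / t) *\<^sub>R \<xi>s j) - \<xi>p j)) - real N * ((1 + 1 / \<delta>) * \<epsilon>)
        + m / (2 * (1 + \<delta>)) * (\<Sum>j<N. (norm (((1 - 1 / t) *\<^sub>R \<xi>k j + (1 / t) *\<^sub>R \<xi>s j) - \<xi>p j))\<^sup>2)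
        + m / 2 * ((1 / t) * (1 - 1 / t)) * (\<Sum>j<N. (norm (\<xi>k j - \<xi>s j))\<^sup>2)"
    and gap: "\<Psi>p + real N * \<nu> / 2 * (norm \<Theta>p)\<^sup>2 - (\<Psi>s + real N * \<nu> / 2 * (norm \<Theta>s)\<^sup>2) \<ge> 0"
  shows "(\<Psi>p + real N * \<nu> / 2 * (norm \<Theta>p)\<^sup>2 - (\<Psi>s + real N * \<nu> / 2 * (norm \<Theta>s)\<^sup>2))
          + 1 / (2 * \<nu> * (1 - \<rho>)) * (\<Sum>j<N. (norm (\<xi>k j + t *\<^sub>R (\<xi>p j - \<xi>k j) - \<xi>s j))\<^sup>2) / t\<^sup>2
       \<le> (1 + \<delta>) * ((1 - 1 / t) * ((\<Psi>k + real N * \<nu> / 2 * (norm \<Theta>k)\<^sup>2 - (\<Psi>s + real N * \<nu> / 2 * (norm \<Theta>s)\<^sup>2))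
          + 1 / (2 * \<nu> * (1 - \<rho>)) * (\<Sum>j<N. (norm (\<xi>k' j + t' *\<^sub>R (\<xi>k j - \<xi>k' j) - \<xi>s j))\<^sup>2) / t'\<^sup>2)
          + real N * ((1 + 1 / \<delta>) * \<epsilon>))"
proof -
  define w where "w = 1 / t"
  define a where "a = (1 - t * \<rho>) / (1 - \<rho>)"
  define x where "x j = (1 - w) *\<^sub>R \<xi>k j + w *\<^sub>R \<xi>s j" for j
  define y where "y j = (1 + \<beta>) *\<^sub>R \<xi>k j - \<beta> *\<^sub>R \<xi>k' j" for j
  have w: "0 \<le> w" "w \<le> 1" using t by (auto simp: w_def)
  have a: "0 \<le> a" "a \<le> 1" using t \<rho> mult_left_mono[of 1 t \<rho>] by (auto simp: a_def field_simps mult.commute)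
  have "t * \<beta> = a * (t' - 1)" using t by (simp add: \<beta> a_def)
  have "(norm ((1 - w) *\<^sub>R \<Theta>k + w *\<^sub>R \<Theta>s))\<^sup>2 \<le> (1 - w) * (norm \<Theta>k)\<^sup>2 + w * (norm \<Theta>s)\<^sup>2"
    using norm_convex_comb_power2[of w \<Theta>k \<Theta>s] w by simp
  moreover have "(\<Sum>j<N. x j) = - (real N * \<nu>) *\<^sub>R ((1 - w) *\<^sub>R \<Theta>k + w *\<^sub>R \<Theta>s)"
    unfolding x_def sum.distrib scaleR_sum_right[symmetric] sum_k sum_s by (simp add: algebra_simps)
  moreover have "\<xi>p j = y j + \<nu> *\<^sub>R c - \<nu> *\<^sub>R \<theta> j" if "j < N" for j using \<xi>p[OF that] by (simp add: y_def)
  ultimately have server: "(\<Sum>j<N. \<theta> j \<bullet> (x j - \<xi>p j))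
      + 1 / (2 * \<nu>) * ((\<Sum>j<N. (norm (x j - y j))\<^sup>2) - (\<Sum>j<N. (norm (x j - \<xi>p j))\<^sup>2))
      + real N * \<nu> / 2 * ((1 - w) * (norm \<Theta>k)\<^sup>2 + w * (norm \<Theta>s)\<^sup>2 - (norm \<Theta>p)\<^sup>2) \<ge> 0"
    using server_step_inequality[OF N \<nu> _ sum_\<theta> _ sum_p] by blast
  have "(\<Sum>j<N. (norm (x j - y j))\<^sup>2) \<le> (\<Sum>j<N. ((1 - a) * (norm (\<xi>k j - \<xi>s j))\<^sup>2
      + a * (norm (\<xi>k' j + t' *\<^sub>R (\<xi>k j - \<xi>k' j) - \<xi>s j))\<^sup>2) / t\<^sup>2)"
    unfolding x_def y_def w_def using t a \<open>t * \<beta> = a * (t' - 1)\<close>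
    by (intro sum_mono extrapolation_dist_bound) auto
  also have "\<dots> = 1 / t\<^sup>2 * ((1 - a) * (\<Sum>j<N. (norm (\<xi>k j - \<xi>s j))\<^sup>2)
      + a * (\<Sum>j<N. (norm (\<xi>k' j + t' *\<^sub>R (\<xi>k j - \<xi>k' j) - \<xi>s j))\<^sup>2))"
    by (simp add: sum.distrib sum_distrib_left flip: sum_divide_distrib)
  finally have Sy: "(\<Sum>j<N. (norm (x j - y j))\<^sup>2) \<le> 1 / t\<^sup>2 * ((1 - a) * (\<Sum>j<N. (norm (\<xi>k j - \<xi>s j))\<^sup>2)
      + a * (\<Sum>j<N. (norm (\<xi>k' j + t' *\<^sub>R (\<xi>k j - \<xi>k' j) - \<xi>s j))\<^sup>2))" .
  have Sp: "(\<Sum>j<N. (norm (x j - \<xi>p j))\<^sup>2) = (\<Sum>j<N. (norm (\<xi>k j + t *\<^sub>R (\<xi>p j - \<xi>k j) - \<xi>s j))\<^sup>2) / t\<^sup>2"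
    unfolding x_def w_def using t by (simp add: momentum_dist_eq sum_divide_distrib)
  note K = dualfl_lyapunov_coefficients[OF \<nu> \<rho> t(1,2) rec \<delta>, folded m a_def w_def]
  show ?thesis unfolding w_def[symmetric]
    by (rule dualfl_lyapunov_step_arith[OF client[folded w_def, folded x_def] server Sy Sp K _ \<delta> _ gap])
      (use \<nu> in \<open>auto intro: sum_nonneg\<close>)
qed

section \<open>Dual iterates of DualFL\<close>

lemma dualfl_zeta_Suc:
  "dualfl_zeta \<rho> th thj (Suc k)
    = (1 + dualfl_beta \<rho> k) *\<^sub>R (dualfl_zeta \<rho> th thj k + th (Suc k) - thj (Suc k))
      - dualfl_beta \<rho> k *\<^sub>R
          (if k = 0 then th 0 - thj 0 else dualfl_zeta \<rho> th thj (k - 1) + th k - thj k)"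
  by (cases k) auto

lemma dualfl_zeta_sum_eq_0:
  fixes \<theta>loc :: "nat \<Rightarrow> nat \<Rightarrow> 'a::real_vector"
  assumes "N > 0" and \<theta>: "\<And>n. \<theta> n = (1 / real N) *\<^sub>R (\<Sum>j<N. \<theta>loc j n)"
  shows "(\<Sum>j<N. dualfl_zeta \<rho> \<theta> (\<theta>loc j) n) = 0"
proof (induction n rule: less_induct)
  case (less n)
  have mean: "(\<Sum>j<N. \<theta> k - \<theta>loc j k) = 0" for k
    using \<open>N > 0\<close> by (simp add: sum_subtractf \<theta> sum_constant_scaleR)
  show ?case
  proof (cases n)
    case (Suc k)
    have "(\<Sum>j<N. dualfl_zeta \<rho> \<theta> (\<theta>loc j) (Suc k)) =
      (1 + dualfl_beta \<rho> k) *\<^sub>R ((\<Sum>j<N. dualfl_zeta \<rho> \<theta> (\<theta>loc j) k) + (\<Sum>j<N. \<theta> (Suc k) - \<theta>loc j (Suc k)))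
      - dualfl_beta \<rho> k *\<^sub>R (if k = 0 then (\<Sum>j<N. \<theta> 0 - \<theta>loc j 0)
          else (\<Sum>j<N. dualfl_zeta \<rho> \<theta> (\<theta>loc j) (k - 1)) + (\<Sum>j<N. \<theta> k - \<theta>loc j k))"
      by (simp add: dualfl_zeta_Suc scaleR_sum_right sum_subtractf sum.distrib algebra_simps)
    also have "\<dots> = 0" using less Suc mean by simp
    finally show ?thesis using Suc by simp
  qed simp
qed

text \<open>
  Two hypotheses of the theorem are left out: convexity of \<open>f j\<close>, which follows from strong
  convexity, and \<open>\<mu> > 0\<close>, which follows from \<open>0 < \<nu> \<le> \<mu>\<close>.
\<close>

locale dualfl_run =
  fixes N :: nat and f :: "nat \<Rightarrow> 'a::euclidean_space \<Rightarrow> real"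
    and \<mu> L \<rho> \<nu> \<gamma> :: real and \<theta>star :: 'a
    and \<theta>loc :: "nat \<Rightarrow> nat \<Rightarrow> 'a" and E :: "'a \<Rightarrow> real" and \<theta> :: "nat \<Rightarrow> 'a"
    and G :: "nat \<Rightarrow> 'a \<Rightarrow> 'a"
  assumes E_def: "E = (\<lambda>x. (\<Sum>j<N. f j x) / real N)"
    and \<theta>_def: "\<theta> = (\<lambda>n. (1 / real N) *\<^sub>R (\<Sum>j<N. \<theta>loc j n))"
    and N: "N > 0" and L: "L > 0"
    and strongly_convex: "\<And>j. j < N \<Longrightarrow> strongly_convex \<mu> (f j)"
    and deriv: "\<And>j x. j < N \<Longrightarrow> (f j has_derivative (\<lambda>v. G j x \<bullet> v)) (at x)"
    and lipschitz: "\<And>j x y. j < N \<Longrightarrow> norm (G j x - G j y) \<le> L * norm (x - y)"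
    and minimizer: "\<And>x. E \<theta>star \<le> E x"
    and \<rho>: "0 \<le> \<rho>" "\<rho> \<le> \<nu> / L" and \<nu>: "0 < \<nu>" "\<nu> \<le> \<mu>"
    and \<gamma>: "\<gamma> > 0"
    and init: "\<And>j. j < N \<Longrightarrow> \<theta>loc j 0 = 0"
    and gap: "\<And>j n. j < N \<Longrightarrow>
           dualfl_gap \<nu> (f j) (dualfl_zeta \<rho> \<theta> (\<theta>loc j) n) (\<theta>loc j (Suc n))
             \<le> ereal (1 / real N * ((1 - sqrt \<rho>) / (1 + \<gamma>)) ^ n)"
begin

definition "g j x = f j x - \<nu> / 2 * (norm x)\<^sup>2"
definition "\<zeta> n j = dualfl_zeta \<rho> \<theta> (\<theta>loc j) n"
definition "\<epsilon> n = 1 / real N * ((1 - sqrt \<rho>) / (1 + \<gamma>)) ^ n"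

text \<open>
  \<open>\<xi> n j\<close> is the point \<open>\<nu> (\<zeta>\<^sub>j(n-1) - \<theta>\<^sub>j(n))\<close> at which \<open>g\<^sub>j\<^sup>*\<close> is evaluated in the gap
  \<open>\<Gamma>\<^sup>n\<^sup>-\<^sup>1\<^sup>,\<^sup>j\<close>. \<open>\<psi> n j\<close> is meaningful only for \<open>n \<ge> 1\<close>, where the gap hypothesis makes
  \<open>g\<^sub>j\<^sup>*(\<xi> n j)\<close> finite; \<open>\<xi>s\<close> is the dual solution.
\<close>
definition "\<xi> n j = (if n = 0 then 0 else \<nu> *\<^sub>R (\<zeta> (n - 1) j - \<theta>loc j n))"
definition "\<psi> n j = real_of_ereal (fconj (g j) (\<xi> n j))"
definition "\<xi>s j = G j \<theta>star - \<nu> *\<^sub>R \<theta>star"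
definition "\<psi>s j = \<xi>s j \<bullet> \<theta>star - g j \<theta>star"

lemma \<theta>_0: "\<theta> 0 = 0" using init by (simp add: \<theta>_def)

lemma gradient_sum_minimizer: "(\<Sum>j<N. G j \<theta>star) = 0"
proof -
  define S where "S = (\<Sum>j<N. G j \<theta>star)"
  have "((\<lambda>x. (1 / real N) * (\<Sum>j<N. f j x)) has_derivative
      (\<lambda>v. (1 / real N) * (\<Sum>j<N. G j \<theta>star \<bullet> v))) (at \<theta>star)"
    by (intro has_derivative_mult_right has_derivative_sum deriv) auto
  moreover have "(\<lambda>x. (1 / real N) * (\<Sum>j<N. f j x)) = E" by (auto simp: E_def)
  ultimately have "(E has_derivative (\<lambda>v. (1 / real N) * (\<Sum>j<N. G j \<theta>star \<bullet> v))) (at \<theta>star)"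
    by simp
  then have "(\<lambda>v. (1 / real N) * (\<Sum>j<N. G j \<theta>star \<bullet> v)) = (\<lambda>h. 0)"
    by (rule has_derivative_local_min) (simp add: minimizer always_eventually)
  then have "(1 / real N) * (\<Sum>j<N. G j \<theta>star \<bullet> S) = 0" by metis
  then have "S \<bullet> S = 0" using N by (simp add: S_def inner_sum_left)
  then show ?thesis by (simp add: S_def)
qed

lemma \<xi>_sum: "(\<Sum>j<N. \<xi> n j) = - (real N * \<nu>) *\<^sub>R \<theta> n"
proof (cases n)
  case 0 then show ?thesis by (simp add: \<xi>_def \<theta>_0)
next
  case (Suc k)
  have "(\<Sum>j<N. \<zeta> k j) = 0"
    unfolding \<zeta>_def by (rule dualfl_zeta_sum_eq_0[OF N]) (simp add: \<theta>_def)
  then have "(\<Sum>j<N. \<xi> n j) = - \<nu> *\<^sub>R (\<Sum>j<N. \<theta>loc j n)"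
    by (simp add: \<xi>_def Suc scaleR_sum_right[symmetric] sum_subtractf)
  also have "\<dots> = - (real N * \<nu>) *\<^sub>R \<theta> n" using N by (simp add: \<theta>_def)
  finally show ?thesis .
qed

lemma \<xi>s_sum: "(\<Sum>j<N. \<xi>s j) = - (real N * \<nu>) *\<^sub>R \<theta>star"
  by (simp add: \<xi>s_def sum_subtractf gradient_sum_minimizer sum_constant_scaleR)

lemma \<psi>_Suc_bounds:
  assumes "j < N"
  shows "\<psi> (Suc n) j \<le> \<epsilon> n + \<xi> (Suc n) j \<bullet> \<theta>loc j (Suc n) - g j (\<theta>loc j (Suc n))"
    and "\<And>y. \<xi> (Suc n) j \<bullet> y - g j y \<le> \<psi> (Suc n) j"
proof -
  have "g j = (\<lambda>x. f j x - \<nu> / 2 * (norm x)\<^sup>2)" by (auto simp: g_def)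
  moreover have "\<xi> (Suc n) j = \<nu> *\<^sub>R (\<zeta> n j - \<theta>loc j (Suc n))" by (simp add: \<xi>_def)
  moreover note bounds = dualfl_gap_conjugate_bounds[OF gap[OF assms, of n] \<nu>(1)]
  ultimately show "\<psi> (Suc n) j \<le> \<epsilon> n + \<xi> (Suc n) j \<bullet> \<theta>loc j (Suc n) - g j (\<theta>loc j (Suc n))"
    and "\<And>y. \<xi> (Suc n) j \<bullet> y - g j y \<le> \<psi> (Suc n) j"
    unfolding \<psi>_def \<zeta>_def \<epsilon>_def by simp_all
qed

lemma \<psi>s_bound: "j < N \<Longrightarrow> \<xi>s j \<bullet> y - g j y \<le> \<psi>s j"
  using shifted_strongly_convex_tangent[OF strongly_convex \<nu>(2) deriv, of j \<theta>star y]
  by (simp add: \<psi>s_def \<xi>s_def g_def inner_diff_right inner_commute algebra_simps)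

lemma g_upper_bound:
  "j < N \<Longrightarrow> g j y \<le> g j x + (G j x - \<nu> *\<^sub>R x) \<bullet> (y - x) + (L - \<nu>) / 2 * (norm (y - x))\<^sup>2"
  unfolding g_def by (rule shifted_smooth_upper_bound[OF deriv lipschitz])

definition "\<Psi> n = (\<Sum>j<N. \<psi> n j)"
definition "\<Psi>s = (\<Sum>j<N. \<psi>s j)"
definition "F n = \<Psi> n + real N * \<nu> / 2 * (norm (\<theta> n))\<^sup>2"
definition "Fs = \<Psi>s + real N * \<nu> / 2 * (norm \<theta>star)\<^sup>2"

text \<open>
  The FISTA Lyapunov function: dual suboptimality plus the scaled distance of the extrapolated
  point \<open>\<xi>(n-1) + t\<^sub>n\<^sub>-\<^sub>1 (\<xi>(n) - \<xi>(n-1))\<close> to the dual solution. It is only used for \<open>\<rho> < 1\<close>.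
\<close>
definition "U n = (\<Sum>j<N. (norm (\<xi> (n - 1) j + dualfl_t \<rho> (n - 1) *\<^sub>R (\<xi> n j - \<xi> (n - 1) j) - \<xi>s j))\<^sup>2)"
definition "W n = (F n - Fs) + 1 / (2 * \<nu> * (1 - \<rho>)) * U n / (dualfl_t \<rho> (n - 1))\<^sup>2"

lemma F_minus_Fs_ge:
  assumes "n \<ge> 1"
  shows "F n - Fs \<ge> real N * \<nu> / 2 * (norm (\<theta> n - \<theta>star))\<^sup>2"
proof -
  obtain m where m: "n = Suc m" using assms by (cases n) auto
  have "\<Psi> n \<ge> (\<Sum>j<N. \<xi> n j \<bullet> \<theta>star - g j \<theta>star)"
    unfolding \<Psi>_def m by (intro sum_mono \<psi>_Suc_bounds) auto
  moreover have "\<Psi>s = (\<Sum>j<N. \<xi>s j \<bullet> \<theta>star - g j \<theta>star)" by (simp add: \<Psi>s_def \<psi>s_def)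
  ultimately have "\<Psi> n - \<Psi>s \<ge> (\<Sum>j<N. \<xi> n j) \<bullet> \<theta>star - (\<Sum>j<N. \<xi>s j) \<bullet> \<theta>star"
    by (simp add: sum_subtractf inner_sum_left)
  also have "(\<Sum>j<N. \<xi> n j) \<bullet> \<theta>star - (\<Sum>j<N. \<xi>s j) \<bullet> \<theta>star = - (real N * \<nu>) * ((\<theta> n - \<theta>star) \<bullet> \<theta>star)"
    by (simp add: \<xi>_sum \<xi>s_sum inner_diff_left algebra_simps)
  finally have "\<Psi> n - \<Psi>s \<ge> - (real N * \<nu>) * ((\<theta> n - \<theta>star) \<bullet> \<theta>star)" .
  then show ?thesis using scaled_norm_power2_expand[of "real N * \<nu>" "\<theta> n" \<theta>star]
    unfolding F_def Fs_def by (simp add: inner_commute algebra_simps)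
qed

lemma \<nu>_\<zeta>_Suc:
  assumes "j < N"
  shows "\<nu> *\<^sub>R \<zeta> (Suc m) j = ((1 + dualfl_beta \<rho> m) *\<^sub>R \<xi> (Suc m) j - dualfl_beta \<rho> m *\<^sub>R \<xi> m j)
     + \<nu> *\<^sub>R ((1 + dualfl_beta \<rho> m) *\<^sub>R \<theta> (Suc m) - dualfl_beta \<rho> m *\<^sub>R \<theta> m)"
proof -
  have a: "\<nu> *\<^sub>R (\<zeta> m j + \<theta> (Suc m) - \<theta>loc j (Suc m)) = \<xi> (Suc m) j + \<nu> *\<^sub>R \<theta> (Suc m)"
    by (simp add: \<xi>_def algebra_simps)
  have b: "\<nu> *\<^sub>R (if m = 0 then \<theta> 0 - \<theta>loc j 0 else \<zeta> (m - 1) j + \<theta> m - \<theta>loc j m)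
      = \<xi> m j + \<nu> *\<^sub>R \<theta> m"
    using init[OF assms] \<theta>_0 by (cases m) (auto simp: \<xi>_def algebra_simps)
  have "\<nu> *\<^sub>R \<zeta> (Suc m) j
      = (1 + dualfl_beta \<rho> m) *\<^sub>R (\<nu> *\<^sub>R (\<zeta> m j + \<theta> (Suc m) - \<theta>loc j (Suc m)))
        - dualfl_beta \<rho> m *\<^sub>R (\<nu> *\<^sub>R (if m = 0 then \<theta> 0 - \<theta>loc j 0 else \<zeta> (m - 1) j + \<theta> m - \<theta>loc j m))"
    unfolding \<zeta>_def dualfl_zeta_Suc by (simp add: algebra_simps)
  then show ?thesis unfolding a b by (simp add: algebra_simps)
qed

lemma \<Psi>_three_point:
  assumes \<rho>1: "\<rho> < 1" and "k \<ge> 1" and \<delta>: "\<delta> > 0"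
  defines "w \<equiv> 1 / dualfl_t \<rho> k" and "m \<equiv> \<rho> / (\<nu> * (1 - \<rho>))"
  shows "(1 - w) * \<Psi> k + w * \<Psi>s \<ge> \<Psi> (Suc k)
      + (\<Sum>j<N. \<theta>loc j (Suc k) \<bullet> (((1 - w) *\<^sub>R \<xi> k j + w *\<^sub>R \<xi>s j) - \<xi> (Suc k) j))
      - real N * ((1 + 1 / \<delta>) * \<epsilon> k)
      + m / (2 * (1 + \<delta>)) * (\<Sum>j<N. (norm (((1 - w) *\<^sub>R \<xi> k j + w *\<^sub>R \<xi>s j) - \<xi> (Suc k) j))\<^sup>2)
      + m / 2 * (w * (1 - w)) * (\<Sum>j<N. (norm (\<xi> k j - \<xi>s j))\<^sup>2)"
proof -
  obtain k' where k: "k = Suc k'" using \<open>k \<ge> 1\<close> by (cases k) auto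
  have "\<rho> * L \<le> \<nu>" using \<rho> L by (simp add: field_simps)
  then have "m * (L - \<nu>) \<le> 1" using \<nu> \<rho>1 unfolding m_def by (simp add: field_simps algebra_simps)
  moreover have "0 \<le> m" using \<rho> \<rho>1 \<nu> unfolding m_def by simp
  moreover have "0 \<le> w" "w \<le> 1" using dualfl_t_ge_1[of \<rho> k] \<rho> \<rho>1 unfolding w_def by auto
  ultimately have "(1 - w) * \<psi> k j + w * \<psi>s j \<ge> \<psi> (Suc k) j
      + \<theta>loc j (Suc k) \<bullet> (((1 - w) *\<^sub>R \<xi> k j + w *\<^sub>R \<xi>s j) - \<xi> (Suc k) j) - (1 + 1 / \<delta>) * \<epsilon> k
      + m / (2 * (1 + \<delta>)) * (norm (((1 - w) *\<^sub>R \<xi> k j + w *\<^sub>R \<xi>s j) - \<xi> (Suc k) j))\<^sup>2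
      + m / 2 * (w * (1 - w)) * (norm (\<xi> k j - \<xi>s j))\<^sup>2" if j: "j < N" for j
  proof (intro inexact_dual_step_inequality[where g="g j" and K="L - \<nu>"] \<delta>)
    show "g j y \<le> g j (\<theta>loc j (Suc k)) + (G j (\<theta>loc j (Suc k)) - \<nu> *\<^sub>R \<theta>loc j (Suc k)) \<bullet> (y - \<theta>loc j (Suc k))
        + (L - \<nu>) / 2 * (norm (y - \<theta>loc j (Suc k)))\<^sup>2" for y
      by (rule g_upper_bound[OF j])
    show "\<xi> k j \<bullet> y - g j y \<le> \<psi> k j" for y unfolding k by (rule \<psi>_Suc_bounds(2)[OF j])
    show "\<xi>s j \<bullet> y - g j y \<le> \<psi>s j" for y by (rule \<psi>s_bound[OF j])
    show "\<xi> (Suc k) j \<bullet> y - g j y \<le> \<psi> (Suc k) j" for y by (rule \<psi>_Suc_bounds(2)[OF j])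
    show "\<psi> (Suc k) j \<le> \<epsilon> k + \<xi> (Suc k) j \<bullet> \<theta>loc j (Suc k) - g j (\<theta>loc j (Suc k))"
      by (rule \<psi>_Suc_bounds(1)[OF j])
  qed auto
  then have "(\<Sum>j<N. \<psi> (Suc k) j
      + \<theta>loc j (Suc k) \<bullet> (((1 - w) *\<^sub>R \<xi> k j + w *\<^sub>R \<xi>s j) - \<xi> (Suc k) j) - (1 + 1 / \<delta>) * \<epsilon> k
      + m / (2 * (1 + \<delta>)) * (norm (((1 - w) *\<^sub>R \<xi> k j + w *\<^sub>R \<xi>s j) - \<xi> (Suc k) j))\<^sup>2
      + m / 2 * (w * (1 - w)) * (norm (\<xi> k j - \<xi>s j))\<^sup>2) \<le> (\<Sum>j<N. (1 - w) * \<psi> k j + w * \<psi>s j)"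
    by (intro sum_mono) auto
  then show ?thesis by (simp add: \<Psi>_def \<Psi>s_def sum.distrib sum_subtractf sum_distrib_left)
qed

lemma W_Suc_le:
  assumes \<rho>1: "\<rho> < 1" and "k \<ge> 1" and \<delta>: "\<delta> > 0"
  shows "W (Suc k) \<le> (1 + \<delta>) * ((1 - 1 / dualfl_t \<rho> k) * W k + real N * ((1 + 1 / \<delta>) * \<epsilon> k))"
proof -
  obtain k' where k: "k = Suc k'" using \<open>k \<ge> 1\<close> by (cases k) auto
  define \<beta> where "\<beta> = dualfl_beta \<rho> k'"
  have \<rho>': "0 \<le> \<rho>" "\<rho> \<le> 1" using \<rho> \<rho>1 by auto
  have \<xi>_Suc: "\<xi> (Suc k) j = ((1 + \<beta>) *\<^sub>R \<xi> k j - \<beta> *\<^sub>R \<xi> k' j)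
      + \<nu> *\<^sub>R ((1 + \<beta>) *\<^sub>R \<theta> k - \<beta> *\<^sub>R \<theta> k') - \<nu> *\<^sub>R \<theta>loc j (Suc k)" if "j < N" for j
    using \<nu>_\<zeta>_Suc[OF that, of k'] unfolding k \<beta>_def by (simp add: \<xi>_def algebra_simps)
  have sum_\<theta>: "(\<Sum>j<N. \<theta>loc j (Suc k)) = real N *\<^sub>R \<theta> (Suc k)" using N by (simp add: \<theta>_def)
  have "0 \<le> real N * \<nu> / 2 * (norm (\<theta> (Suc k) - \<theta>star))\<^sup>2" using \<nu> by simp
  then have gap: "F (Suc k) - Fs \<ge> 0" using F_minus_Fs_ge[of "Suc k"] by linarith
  have "F (Suc k) - Fs + 1 / (2 * \<nu> * (1 - \<rho>)) * U (Suc k) / (dualfl_t \<rho> k)\<^sup>2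
      \<le> (1 + \<delta>) * ((1 - 1 / dualfl_t \<rho> k) * (F k - Fs + 1 / (2 * \<nu> * (1 - \<rho>)) * U k / (dualfl_t \<rho> k')\<^sup>2)
        + real N * ((1 + 1 / \<delta>) * \<epsilon> k))"
    using dualfl_lyapunov_step[OF N \<nu>(1) \<rho>(1) \<rho>1 dualfl_t_ge_1[OF \<rho>'] dualfl_t_ge_1[OF \<rho>']
        dualfl_t_contraction(1)[OF \<rho>'] dualfl_t_Suc_sq \<beta>_def[unfolded dualfl_beta_def] \<delta> refl
        \<xi>_Suc[unfolded k] sum_\<theta>[unfolded k] \<xi>_sum \<xi>s_sum \<xi>_sum
        \<Psi>_three_point[OF \<rho>1 \<open>k \<ge> 1\<close> \<delta>, unfolded k] gap[unfolded F_def Fs_def k]]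
    unfolding F_def Fs_def U_def k diff_Suc_1 .
  then show ?thesis unfolding W_def k diff_Suc_1 .
qed

text \<open>
  The perturbation weights \<open>\<delta>\<^sub>k = \<sigma>^(k+1)\<close> are summable, and since \<open>(1 + \<gamma>) \<sigma> > 1\<close> the
  error \<open>(1 + \<delta>\<^sub>k)(1 + 1/\<delta>\<^sub>k) N \<epsilon>(k) \<le> 4 N \<epsilon>(k) / \<delta>\<^sub>k\<close> still decays geometrically, with
  ratio \<open>q (1 - \<surd>\<rho>)\<close>.
\<close>
definition "\<sigma> = (2 + \<gamma>) / (2 + 2 * \<gamma>)"
definition "q = 2 / (2 + \<gamma>)"

lemma \<sigma>: "0 < \<sigma>" "\<sigma> < 1" using \<gamma> by (auto simp: \<sigma>_def field_simps)
lemma q: "0 < q" "q < 1" using \<gamma> by (auto simp: q_def field_simps)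

lemma perturbation_error_le:
  assumes "\<rho> \<le> 1"
  shows "(1 + \<sigma> ^ Suc k) * (real N * ((1 + 1 / \<sigma> ^ Suc k) * \<epsilon> (Suc k)))
    \<le> 4 * ((1 - sqrt \<rho>) * q) ^ Suc k"
proof -
  define d where "d = \<sigma> ^ Suc k"
  define r where "r = 1 - sqrt \<rho>"
  have "0 \<le> r" using assms \<rho> by (simp add: r_def)
  have d: "0 < d" "d \<le> 1" unfolding d_def using \<sigma> by (auto intro!: power_le_one simp del: power_Suc)
  have \<sigma>_rescaled: "(1 + \<gamma>) * \<sigma> = (2 + \<gamma>) / 2" using \<gamma> by (simp add: \<sigma>_def field_simps)
  have err: "real N * \<epsilon> (Suc k) = (r / (1 + \<gamma>)) ^ Suc k" using N by (simp add: \<epsilon>_def r_def)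
  have "(1 + d) * (1 + d) \<le> 2 * 2" using d by (intro mult_mono) auto
  moreover have "(1 + d) * (1 + 1 / d) = (1 + d) * (1 + d) / d" using d by (simp add: field_simps)
  ultimately have "(1 + d) * (1 + 1 / d) \<le> 4 / d" using d by (simp add: divide_right_mono)
  moreover have "0 \<le> real N * \<epsilon> (Suc k)" unfolding err using \<open>0 \<le> r\<close> \<gamma> by simp
  ultimately have "(1 + d) * (real N * ((1 + 1 / d) * \<epsilon> (Suc k))) \<le> 4 / d * (r / (1 + \<gamma>)) ^ Suc k"
    using mult_right_mono unfolding err[symmetric] by (fastforce simp: mult_ac)
  also have "4 / d * (r / (1 + \<gamma>)) ^ Suc k = 4 * (r / ((1 + \<gamma>) * \<sigma>)) ^ Suc k"
    using \<sigma> by (simp add: d_def power_divide power_mult_distrib)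
  also have "r / ((1 + \<gamma>) * \<sigma>) = r * q" unfolding \<sigma>_rescaled using \<gamma> by (simp add: q_def field_simps)
  finally show ?thesis unfolding d_def r_def .
qed

lemma W_recursion:
  assumes "\<rho> < 1"
  shows "W (Suc (Suc k))
    \<le> (1 + \<sigma> ^ Suc k) * (1 - 1 / dualfl_t \<rho> (Suc k)) * W (Suc k) + 4 * ((1 - sqrt \<rho>) * q) ^ Suc k"
proof -
  have "W (Suc (Suc k)) \<le> (1 + \<sigma> ^ Suc k) * ((1 - 1 / dualfl_t \<rho> (Suc k)) * W (Suc k)
      + real N * ((1 + 1 / \<sigma> ^ Suc k) * \<epsilon> (Suc k)))"
    using \<sigma> by (intro W_Suc_le assms) auto
  then show ?thesis using perturbation_error_le[of k] assms by (simp add: algebra_simps)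
qed

lemma W_rate:
  assumes \<rho>1: "\<rho> < 1"
    and T: "\<And>k. T k > 0" "\<And>k. (1 - 1 / dualfl_t \<rho> (Suc k)) * T k \<le> T (Suc k)"
    and \<eta>: "\<And>k. 0 \<le> \<eta> k" "\<And>k. 4 * ((1 - sqrt \<rho>) * q) ^ Suc k \<le> \<eta> k * T (Suc k)"
      "\<And>k. (\<Sum>i<k. \<eta> i) \<le> H"
  shows "W (Suc k) \<le> (\<bar>W 1\<bar> / T 0 + H) * exp (1 / (1 - \<sigma>)) * T k"
proof (rule perturbed_recursion_bound[where W="\<lambda>k. W (Suc k)" and \<delta>="\<lambda>k. \<sigma> ^ Suc k" and \<eta>=\<eta> and T=T
      and a="\<lambda>k. 1 - 1 / dualfl_t \<rho> (Suc k)" and e="\<lambda>k. 4 * ((1 - sqrt \<rho>) * q) ^ Suc k"])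
  show "W (Suc (Suc k)) \<le> (1 + \<sigma> ^ Suc k) * (1 - 1 / dualfl_t \<rho> (Suc k)) * W (Suc k)
      + 4 * ((1 - sqrt \<rho>) * q) ^ Suc k" for k
    by (rule W_recursion[OF \<rho>1])
  show "0 \<le> 1 - 1 / dualfl_t \<rho> (Suc k)" for k using dualfl_t_ge_1[of \<rho> "Suc k"] \<rho> \<rho>1 by simp
  show "(\<Sum>i<k. \<sigma> ^ Suc i) \<le> 1 / (1 - \<sigma>)" for k
  proof -
    have "(\<Sum>i<k. \<sigma> ^ Suc i) \<le> (\<Sum>i<k. \<sigma> ^ i)" using \<sigma> by (intro sum_mono) (auto simp: mult_left_le_one_le)
    with sum_power_le[of \<sigma> k] \<sigma> show ?thesis by simp
  qed
  show "W (Suc 0) \<le> \<bar>W 1\<bar> / T 0 * T 0" and "0 \<le> \<bar>W 1\<bar> / T 0" using T(1)[of 0] by simp_all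
  show "0 \<le> \<sigma> ^ Suc k" for k using \<sigma> by simp
qed (fact T \<eta>)+

lemma W_geometric_rate:
  assumes "\<rho> < 1"
  shows "\<exists>C. \<forall>n\<ge>1. W n \<le> C * (1 - sqrt \<rho>) ^ n"
proof -
  define r where "r = 1 - sqrt \<rho>"
  have r: "0 < r" "r \<le> 1" using assms \<rho> by (auto simp: r_def)
  have T: "(1 - 1 / dualfl_t \<rho> (Suc k)) * r ^ Suc k \<le> r ^ Suc (Suc k)" for k
  proof -
    have "1 - 1 / dualfl_t \<rho> (Suc k) \<le> r"
      unfolding r_def by (rule dualfl_t_contraction(2)) (use assms \<rho> in auto)
    then show ?thesis using r by (simp add: mult_right_mono)
  qed
  have \<eta>: "4 * ((1 - sqrt \<rho>) * q) ^ Suc k \<le> 4 * q ^ Suc k / r * r ^ Suc (Suc k)" for k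
    using r by (simp add: r_def[symmetric] power_mult_distrib field_simps)
  have H: "(\<Sum>i<k. 4 * q ^ Suc i / r) \<le> 4 / (r * (1 - q))" for k
  proof -
    have "(\<Sum>i<k. 4 * q ^ Suc i / r) \<le> (\<Sum>i<k. (4 / r) * q ^ i)"
      using q r by (intro sum_mono) (auto simp: mult_left_le_one_le field_simps)
    also have "\<dots> \<le> (4 / r) * (1 / (1 - q))"
      unfolding sum_distrib_left[symmetric] using q r by (intro mult_left_mono sum_power_le) auto
    finally show ?thesis by simp
  qed
  have "0 < r ^ k" "0 \<le> 4 * q ^ Suc k / r" for k using r q by auto
  from W_rate[OF assms this(1) T this(2) \<eta> H]
  have bound: "W (Suc k) \<le> (\<bar>W 1\<bar> / r + 4 / (r * (1 - q))) * exp (1 / (1 - \<sigma>)) * r ^ Suc k" for k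
    by simp
  show ?thesis
  proof (intro exI allI impI)
    fix n :: nat assume "1 \<le> n"
    then obtain k where "n = Suc k" by (cases n) auto
    with bound[of k] show "W n \<le> (\<bar>W 1\<bar> / r + 4 / (r * (1 - q))) * exp (1 / (1 - \<sigma>)) * (1 - sqrt \<rho>) ^ n"
      by (simp add: r_def)
  qed
qed

lemma W_harmonic_rate:
  assumes "\<rho> < 1"
  shows "\<exists>C. \<forall>n\<ge>1. W n \<le> C / real n"
proof -
  have T: "(1 - 1 / dualfl_t \<rho> (Suc k)) * (1 / (real k + 1)) \<le> 1 / (real (Suc k) + 1)" for k
  proof -
    define t where "t = dualfl_t \<rho> (Suc k)"
    have "t \<ge> 1" "t \<le> real k + 2"
      using dualfl_t_ge_1[of \<rho> "Suc k"] dualfl_t_le[of \<rho> "Suc k"] assms \<rho> unfolding t_def by auto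
    then have "1 - 1 / t \<le> (real k + 1) / (real k + 2)" by (simp add: field_simps)
    then show ?thesis unfolding t_def by (simp add: divide_right_mono field_simps)
  qed
  have \<eta>: "4 * ((1 - sqrt \<rho>) * q) ^ Suc k \<le> 8 * ((real k + 1) * q ^ k) * (1 / (real (Suc k) + 1))" for k
  proof -
    have "0 \<le> 1 - sqrt \<rho>" "1 - sqrt \<rho> \<le> 1" using assms \<rho> by auto
    then have "((1 - sqrt \<rho>) * q) ^ Suc k \<le> q ^ Suc k"
      using q by (intro power_mono) (auto simp: mult_left_le_one_le)
    also have "\<dots> \<le> q ^ k" using q by (simp add: mult_left_le_one_le)
    finally have "4 * ((1 - sqrt \<rho>) * q) ^ Suc k \<le> 4 * q ^ k" by simp
    moreover have "4 * q ^ k * (real k + 2) \<le> 8 * ((real k + 1) * q ^ k)"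
      using q by (simp add: algebra_simps)
    then have "4 * q ^ k \<le> 8 * ((real k + 1) * q ^ k) * (1 / (real (Suc k) + 1))"
      by (simp add: field_simps)
    ultimately show ?thesis by linarith
  qed
  have H: "(\<Sum>i<k. 8 * ((real i + 1) * q ^ i)) \<le> 8 / (1 - q)\<^sup>2" for k
    using sum_Suc_mult_power_le[of q k] q by (simp add: sum_distrib_left[symmetric])
  have "0 < 1 / (real k + 1)" "0 \<le> 8 * ((real k + 1) * q ^ k)" for k using q by auto
  from W_rate[OF assms this(1) T this(2) \<eta> H]
  have bound: "W (Suc k) \<le> (\<bar>W 1\<bar> + 8 / (1 - q)\<^sup>2) * exp (1 / (1 - \<sigma>)) * (1 / (real k + 1))" for k
    by simp
  show ?thesis
  proof (intro exI allI impI)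
    fix n :: nat assume "1 \<le> n"
    then obtain k where "n = Suc k" by (cases n) auto
    with bound[of k] show "W n \<le> (\<bar>W 1\<bar> + 8 / (1 - q)\<^sup>2) * exp (1 / (1 - \<sigma>)) / real n"
      by (simp add: add.commute)
  qed
qed

lemma dist_sq_le_W:
  assumes "\<rho> < 1" "n \<ge> 1"
  shows "(norm (\<theta> n - \<theta>star))\<^sup>2 \<le> 2 / (real N * \<nu>) * W n"
proof -
  have "0 \<le> 1 / (2 * \<nu> * (1 - \<rho>)) * U n / (dualfl_t \<rho> (n - 1))\<^sup>2"
    using \<nu> assms by (auto simp: U_def intro!: sum_nonneg divide_nonneg_nonneg mult_nonneg_nonneg)
  then have "F n - Fs \<le> W n" by (simp add: W_def)
  then have "real N * \<nu> / 2 * (norm (\<theta> n - \<theta>star))\<^sup>2 \<le> W n" using F_minus_Fs_ge[OF assms(2)] by linarith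
  then show ?thesis using N \<nu> by (simp add: field_simps)
qed

lemma g_affine_if_L_le_\<nu>:
  assumes "L \<le> \<nu>" and "j < N"
  shows "g j y = g j x + (G j x - \<nu> *\<^sub>R x) \<bullet> (y - x)"
proof -
  have "g j y \<ge> g j x + (G j x - \<nu> *\<^sub>R x) \<bullet> (y - x)"
    using shifted_strongly_convex_tangent[OF strongly_convex \<nu>(2) deriv, OF \<open>j < N\<close> \<open>j < N\<close>]
    by (simp add: g_def)
  moreover have "(L - \<nu>) / 2 * (norm (y - x))\<^sup>2 \<le> 0" using \<open>L \<le> \<nu>\<close> by (simp add: mult_nonpos_nonneg)
  ultimately show ?thesis using g_upper_bound[OF \<open>j < N\<close>, of y x] by linarith
qed

lemma shifted_gradient_constant_if_L_le_\<nu>: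
  assumes "L \<le> \<nu>" and "j < N"
  shows "G j x - \<nu> *\<^sub>R x = G j 0"
proof -
  define v where "v = (G j x - \<nu> *\<^sub>R x) - G j 0"
  note affine = g_affine_if_L_le_\<nu>[OF assms]
  have "g j (x + v) = g j x + (G j x - \<nu> *\<^sub>R x) \<bullet> v" using affine[of "x + v" x] by simp
  moreover have "g j (x + v) = g j 0 + G j 0 \<bullet> (x + v)" using affine[of "x + v" 0] by simp
  moreover have "g j x = g j 0 + G j 0 \<bullet> x" using affine[of x 0] by simp
  ultimately have "(G j x - \<nu> *\<^sub>R x) \<bullet> v = G j 0 \<bullet> v" by (simp add: inner_add_right)
  then have "v \<bullet> v = 0" by (simp add: v_def inner_diff_left)
  then show ?thesis by (simp add: v_def)
qed

lemma \<xi>_Suc_if_\<rho>_eq_1: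
  assumes "\<rho> = 1" and "j < N"
  shows "\<xi> (Suc k) j = G j 0"
proof -
  have "L \<le> \<nu>" using \<rho> \<open>\<rho> = 1\<close> L by (simp add: field_simps)
  define \<theta>j where "\<theta>j = \<theta>loc j (Suc k)"
  define d where "d = G j \<theta>j - \<nu> *\<^sub>R \<theta>j"
  \<comment> \<open>\<open>g\<^sub>j\<close> is affine with slope \<open>d\<close>, so \<open>g\<^sub>j\<^sup>*\<close> is finite only at \<open>d\<close>\<close>
  have bound: "c * (norm (\<xi> (Suc k) j - d))\<^sup>2 \<le> \<epsilon> k" if "c \<ge> 0" for c
  proof -
    have "2 * c * (L - \<nu>) \<le> 1"
      using mult_nonneg_nonpos[of "2 * c" "L - \<nu>"] \<open>c \<ge> 0\<close> \<open>L \<le> \<nu>\<close> by linarith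
    then have "\<psi> (Suc k) j \<ge> \<xi> (Suc k) j \<bullet> \<theta>j - g j \<theta>j + 2 * c / 2 * (norm (\<xi> (Suc k) j - d))\<^sup>2"
      unfolding d_def using \<open>c \<ge> 0\<close>
      by (intro conjugate_quadratic_growth[OF g_upper_bound[OF \<open>j < N\<close>, where x=\<theta>j] _ _
          \<psi>_Suc_bounds(2)[OF \<open>j < N\<close>]]) auto
    then show ?thesis using \<psi>_Suc_bounds(1)[OF \<open>j < N\<close>, of k] unfolding \<theta>j_def by simp
  qed
  have "(norm (\<xi> (Suc k) j - d))\<^sup>2 = 0"
  proof (rule ccontr)
    assume "(norm (\<xi> (Suc k) j - d))\<^sup>2 \<noteq> 0"
    then have pos: "(norm (\<xi> (Suc k) j - d))\<^sup>2 > 0" by simp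
    have "\<epsilon> k \<ge> 0" using bound[of 0] by simp
    then have "((\<epsilon> k + 1) / (norm (\<xi> (Suc k) j - d))\<^sup>2) * (norm (\<xi> (Suc k) j - d))\<^sup>2 \<le> \<epsilon> k"
      using pos by (intro bound) simp
    then show False using pos by simp
  qed
  then show ?thesis using shifted_gradient_constant_if_L_le_\<nu>[OF \<open>L \<le> \<nu>\<close> \<open>j < N\<close>] by (simp add: d_def)
qed

lemma \<theta>_eq_minimizer_if_\<rho>_eq_1:
  assumes "\<rho> = 1" and "n \<ge> 1"
  shows "\<theta> n = \<theta>star"
proof -
  obtain k where n: "n = Suc k" using \<open>n \<ge> 1\<close> by (cases n) auto
  have "L \<le> \<nu>" using \<rho> \<open>\<rho> = 1\<close> L by (simp add: field_simps)
  have "- (real N * \<nu>) *\<^sub>R \<theta> n = (\<Sum>j<N. G j 0)"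
    unfolding \<xi>_sum[symmetric] n by (rule sum.cong) (auto simp: \<xi>_Suc_if_\<rho>_eq_1[OF \<open>\<rho> = 1\<close>])
  also have "\<dots> = - (real N * \<nu>) *\<^sub>R \<theta>star"
    unfolding \<xi>s_sum[symmetric] \<xi>s_def
    by (rule sum.cong) (auto simp: shifted_gradient_constant_if_L_le_\<nu>[OF \<open>L \<le> \<nu>\<close>])
  finally show ?thesis using N \<nu> by simp
qed

lemma E_excess_le: "E x - E \<theta>star \<le> L / 2 * (norm (x - \<theta>star))\<^sup>2"
proof -
  have "(\<Sum>j<N. f j x) \<le> (\<Sum>j<N. f j \<theta>star + G j \<theta>star \<bullet> (x - \<theta>star) + L / 2 * (norm (x - \<theta>star))\<^sup>2)"
    by (intro sum_mono L_smooth_descent[OF deriv lipschitz]) auto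
  also have "\<dots> = (\<Sum>j<N. f j \<theta>star) + real N * (L / 2 * (norm (x - \<theta>star))\<^sup>2)"
    by (simp add: sum.distrib inner_sum_left[symmetric] gradient_sum_minimizer)
  finally have "(\<Sum>j<N. f j x) - (\<Sum>j<N. f j \<theta>star) \<le> real N * (L / 2 * (norm (x - \<theta>star))\<^sup>2)"
    by simp
  then have "((\<Sum>j<N. f j x) - (\<Sum>j<N. f j \<theta>star)) / real N \<le> L / 2 * (norm (x - \<theta>star))\<^sup>2"
    using N by (simp add: divide_le_eq mult.commute)
  then show ?thesis unfolding E_def by (simp add: diff_divide_distrib)
qed

lemma \<mu>_le_L: "\<mu> \<le> L"
proof -
  obtain b :: 'a where "b \<in> Basis" using nonempty_Basis by blast
  then have "(norm b)\<^sup>2 > 0" by auto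
  moreover have "0 \<le> (L - \<mu>) / 2 * (norm b)\<^sup>2"
    using shifted_strongly_convex_tangent[OF strongly_convex[OF N] order.refl deriv[OF N],
        where x=0 and y=b]
      shifted_smooth_upper_bound[OF deriv[OF N] lipschitz[OF N], where \<nu>=\<mu> and y=b and x=0] by simp
  ultimately show ?thesis by (simp add: zero_le_mult_iff)
qed

lemma \<rho>_le_1: "\<rho> \<le> 1"
proof -
  have "\<nu> / L \<le> \<mu> / L" using \<nu> L by (simp add: divide_right_mono)
  also have "\<dots> \<le> 1" using \<mu>_le_L L by simp
  finally show ?thesis using \<rho> by simp
qed

lemma dist_sq_rate: "\<exists>C>0. \<forall>n. (norm (\<theta> n - \<theta>star))\<^sup>2 \<le> C * (1 - sqrt \<rho>) ^ n"
proof -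
  have "\<exists>C. \<forall>n\<ge>1. (norm (\<theta> n - \<theta>star))\<^sup>2 \<le> C * (1 - sqrt \<rho>) ^ n"
  proof (cases "\<rho> < 1")
    case True
    then obtain C where C: "\<forall>n\<ge>1. W n \<le> C * (1 - sqrt \<rho>) ^ n" using W_geometric_rate by blast
    have "(norm (\<theta> n - \<theta>star))\<^sup>2 \<le> (2 / (real N * \<nu>) * C) * (1 - sqrt \<rho>) ^ n" if "n \<ge> 1" for n
      using dist_sq_le_W[OF True that] mult_left_mono[OF C[rule_format, OF that], of "2 / (real N * \<nu>)"] \<nu>
      by simp
    then show ?thesis by blast
  next
    case False
    then have "\<forall>n\<ge>1. (norm (\<theta> n - \<theta>star))\<^sup>2 \<le> 0 * (1 - sqrt \<rho>) ^ n"
      using \<theta>_eq_minimizer_if_\<rho>_eq_1 \<rho>_le_1 by simp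
    then show ?thesis by blast
  qed
  then obtain C where "\<And>n. n \<ge> 1 \<Longrightarrow> (norm (\<theta> n - \<theta>star))\<^sup>2 \<le> C * (1 - sqrt \<rho>) ^ n" by blast
  from power_bound_from_1[OF _ this] \<rho>_le_1 show ?thesis by simp
qed

lemma convergence: "\<theta> \<longlonglongrightarrow> \<theta>star"
proof (cases "\<rho> < 1")
  case True
  obtain C where C: "\<forall>n\<ge>1. W n \<le> C / real n" using W_harmonic_rate[OF True] by blast
  define B where "B = 2 / (real N * \<nu>) * C"
  have "eventually (\<lambda>n. norm (\<theta> n - \<theta>star) \<le> sqrt (B / real n)) sequentially"
    unfolding eventually_sequentially
  proof (intro exI allI impI)
    fix n :: nat assume "n \<ge> 1"
    have "(norm (\<theta> n - \<theta>star))\<^sup>2 \<le> 2 / (real N * \<nu>) * W n" by (rule dist_sq_le_W[OF True \<open>n \<ge> 1\<close>])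
    also have "\<dots> \<le> 2 / (real N * \<nu>) * (C / real n)" using C \<open>n \<ge> 1\<close> N \<nu> by (intro mult_left_mono) auto
    also have "\<dots> = B / real n" by (simp add: B_def)
    finally show "norm (\<theta> n - \<theta>star) \<le> sqrt (B / real n)" by (rule real_le_rsqrt)
  qed
  moreover have "(\<lambda>n. sqrt (B / real n)) \<longlonglongrightarrow> 0"
    using tendsto_real_sqrt[OF lim_const_over_n[of B]] by simp
  ultimately have "(\<lambda>n. \<theta> n - \<theta>star) \<longlonglongrightarrow> 0" by (rule Lim_null_comparison)
  then show ?thesis by (rule LIM_zero_cancel)
next
  case False
  then have "eventually (\<lambda>n. \<theta> n = \<theta>star) sequentially"
    unfolding eventually_sequentially using \<theta>_eq_minimizer_if_\<rho>_eq_1 \<rho>_le_1 by force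
  then show ?thesis by (rule tendsto_eventually)
qed

end

theorem theorem3p3:
  fixes N :: nat and f :: "nat \<Rightarrow> 'a::euclidean_space \<Rightarrow> real"
    and \<mu> L \<rho> \<nu> \<gamma> :: real and \<theta>star :: 'a
    and \<theta>loc :: "nat \<Rightarrow> nat \<Rightarrow> 'a"
  defines "E \<equiv> \<lambda>x. (\<Sum>j<N. f j x) / real N"
      and "\<theta> \<equiv> \<lambda>n. (1 / real N) *\<^sub>R (\<Sum>j<N. \<theta>loc j n)"
  assumes "N > 0" and "\<mu> > 0" and "L > 0"
    and "\<And>j. j < N \<Longrightarrow> convex_on UNIV (f j)"
    and "\<And>j. j < N \<Longrightarrow> strongly_convex \<mu> (f j)"
    and "\<And>j. j < N \<Longrightarrow> L_smooth L (f j)"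
    and "\<And>x. E \<theta>star \<le> E x"
    and "0 \<le> \<rho>" and "\<rho> \<le> \<nu> / L" and "0 < \<nu>" and "\<nu> \<le> \<mu>"
    and "\<gamma> > 0"
    and "\<And>j. j < N \<Longrightarrow> \<theta>loc j 0 = 0"
    and "\<And>j n. j < N \<Longrightarrow>
           dualfl_gap \<nu> (f j) (dualfl_zeta \<rho> \<theta> (\<theta>loc j) n) (\<theta>loc j (Suc n))
             \<le> ereal (1 / real N * ((1 - sqrt \<rho>) / (1 + \<gamma>)) ^ n)"
  shows "\<theta> \<longlonglongrightarrow> \<theta>star
    \<and> (\<exists>C1 C2. C1 > 0 \<and> C2 > 0 \<and>
         (\<forall>n. E (\<theta> n) - E \<theta>star \<le> C1 * (norm (\<theta> n - \<theta>star))\<^sup>2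
              \<and> (norm (\<theta> n - \<theta>star))\<^sup>2 \<le> C2 * (1 - sqrt \<rho>) ^ n))
    \<and> (\<rho> = 1 / (L / \<mu>) \<and> \<nu> = \<mu> \<longrightarrow>
         (\<exists>C1 C2. C1 > 0 \<and> C2 > 0 \<and>
           (\<forall>n. E (\<theta> n) - E \<theta>star \<le> C1 * (norm (\<theta> n - \<theta>star))\<^sup>2
                \<and> (norm (\<theta> n - \<theta>star))\<^sup>2 \<le> C2 * (1 - 1 / sqrt (L / \<mu>)) ^ n)))"
proof -
  obtain G where deriv: "\<And>j x. j < N \<Longrightarrow> (f j has_derivative (\<lambda>v. G j x \<bullet> v)) (at x)"
    and lipschitz: "\<And>j x y. j < N \<Longrightarrow> norm (G j x - G j y) \<le> L * norm (x - y)"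
    using L_smooth_gradients[where N=N and L=L and f=f, OF \<open>\<And>j. j < N \<Longrightarrow> L_smooth L (f j)\<close>]
    by blast
  interpret dualfl_run N f \<mu> L \<rho> \<nu> \<gamma> \<theta>star \<theta>loc E \<theta> G
  proof
    show "E = (\<lambda>x. (\<Sum>j<N. f j x) / real N)" and "\<theta> = (\<lambda>n. (1 / real N) *\<^sub>R (\<Sum>j<N. \<theta>loc j n))"
      by (simp_all add: E_def \<theta>_def)
  qed (fact assms deriv lipschitz)+
  obtain C2 where "C2 > 0" "\<And>n. (norm (\<theta> n - \<theta>star))\<^sup>2 \<le> C2 * (1 - sqrt \<rho>) ^ n"
    using dist_sq_rate by blast
  with E_excess_le \<open>L > 0\<close> have rates: "\<exists>C1 C2. C1 > 0 \<and> C2 > 0 \<and>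
      (\<forall>n. E (\<theta> n) - E \<theta>star \<le> C1 * (norm (\<theta> n - \<theta>star))\<^sup>2
        \<and> (norm (\<theta> n - \<theta>star))\<^sup>2 \<le> C2 * (1 - sqrt \<rho>) ^ n)"
    by (intro exI[of _ "L / 2"] exI[of _ C2]) simp
  moreover have "\<rho> = 1 / (L / \<mu>) \<Longrightarrow> sqrt \<rho> = 1 / sqrt (L / \<mu>)" by (simp add: real_sqrt_divide)
  ultimately show ?thesis using convergence by (metis (no_types, lifting))
qed

end
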